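(* Let ${\mathbb K}$ be a field, $n\geqslant 2$ and $N$ a positive integer. Let $L$ be a set of lines of $\mathrm{AG}_n({\mathbb K})$, let $D\subseteq\mathrm{PG}_{n-1}({\mathbb K})$ be the set of directions of the lines of $L$, and let $S$ be a set of points of $\mathrm{AG}_n({\mathbb K})$ such that every line of $L$ is incident with at least $N$ points of $S$. If $D$ contains an $N^{n-1}$ grid then $|S|\geqslant(\frac{1}{2}N)^n$.
   Context: The direction of an affine line $\{u+\lambda v:\lambda\in{\mathbb K}\}$ is the point $\langle v\rangle$ of $\mathrm{PG}_{n-1}({\mathbb K})$. An $N^{n-1}$ grid in $\mathrm{PG}_{n-1}({\mathbb K})$ is a point set which, with respect to a suitable basis, has the form $\{\langle(a_1,\ldots,a_{n-1},1)\rangle : a_i\in A_i\}$, where each $A_i\subseteq{\mathbb K}$ has size $N$. *)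

theory Defs
  imports Complex_Main
begin

text \<open>Points of AG_n(K): vectors K^n, represented as functions nat => K vanishing
  outside {0..<n} (coordinate i stands for coordinate i+1 of the paper).\<close>
definition kvec :: "nat \<Rightarrow> (nat \<Rightarrow> 'a::field) set" where
  "kvec n = {x. \<forall>i\<ge>n. x i = 0}"

definition aline :: "(nat \<Rightarrow> 'a::field) \<Rightarrow> (nat \<Rightarrow> 'a) \<Rightarrow> (nat \<Rightarrow> 'a) set" where
  "aline u v = {(\<lambda>i. u i + c * v i) | c. True}"

definition is_aline :: "nat \<Rightarrow> (nat \<Rightarrow> 'a::field) set \<Rightarrow> bool" where
  "is_aline n l \<longleftrightarrow> (\<exists>u v. u \<in> kvec n \<and> v \<in> kvec n \<and> v \<noteq> (\<lambda>i. 0) \<and> l = aline u v)"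

definition ppoint :: "(nat \<Rightarrow> 'a::field) \<Rightarrow> (nat \<Rightarrow> 'a) set" where
  "ppoint v = {(\<lambda>i. c * v i) | c. c \<noteq> 0}"

definition directions :: "nat \<Rightarrow> (nat \<Rightarrow> 'a::field) set set \<Rightarrow> (nat \<Rightarrow> 'a) set set" where
  "directions n L = {ppoint v | v. v \<in> kvec n \<and> v \<noteq> (\<lambda>i. 0) \<and> (\<exists>u \<in> kvec n. aline u v \<in> L)}"

definition is_basis :: "nat \<Rightarrow> (nat \<Rightarrow> nat \<Rightarrow> 'a::field) \<Rightarrow> bool" where
  "is_basis n b \<longleftrightarrow> (\<forall>i<n. b i \<in> kvec n) \<and>
     (\<forall>c. (\<forall>j. (\<Sum>i<n. c i * b i j) = 0) \<longrightarrow> (\<forall>i<n. c i = 0))"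

text \<open>The grid {<(a_1,...,a_{n-1},1)> : a_i in A_i} w.r.t. basis b.\<close>
definition grid :: "nat \<Rightarrow> (nat \<Rightarrow> nat \<Rightarrow> 'a::field) \<Rightarrow> (nat \<Rightarrow> 'a set) \<Rightarrow> (nat \<Rightarrow> 'a) set set" where
  "grid n b A = {ppoint (\<lambda>j. (\<Sum>i<n-1. a i * b i j) + b (n-1) j) | a. \<forall>i<n-1. a i \<in> A i}"

definition contains_grid :: "nat \<Rightarrow> nat \<Rightarrow> (nat \<Rightarrow> 'a::field) set set \<Rightarrow> bool" where
  "contains_grid n N D \<longleftrightarrow> (\<exists>b A. is_basis n b \<and> (\<forall>i<n-1. finite (A i) \<and> card (A i) = N)
      \<and> grid n b A \<subseteq> D)"

end

(* Polynomial method.  If |S| * C(2l - 1 + n, n) < C(lN - 1 + n, n), linear algebra yields a nonzero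
   polynomial f of degree d < lN vanishing to order 2l at every point of S.  In coordinates where
   the grid directions are (a, 1) with a in A_1 x ... x A_(n-1), each such direction carries a line
   meeting S in N points, so f vanishes to order 2l at N points of that line; as d < lN this forces
   the top homogeneous part of f to vanish to order l at (a, 1).  Its dehomogenization h has degree
   <= d and vanishes to order l on the whole grid, whereas a Schwartz-Zippel bound with
   multiplicities (induction on the number of variables) gives sum of the vanishing orders of h over
   the grid <= d N^(n-2).  Hence lN <= d, a contradiction.  So |S| >= C(lN - 1 + n, n) / C(2l - 1 + n, n)
   for every l, and letting l tend to infinity gives |S| >= (N/2)^n. *)

theory Submission
  imports Defs "HOL-Library.Poly_Mapping" "HOL-Computational_Algebra.Polynomial" "HOL-Real_Asymp.Real_Asymp"
begin

section \<open>Multivariate polynomials\<close>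

type_synonym 'a mpoly = "(nat \<Rightarrow>\<^sub>0 nat) \<Rightarrow>\<^sub>0 'a"
abbreviation lookup where "lookup \<equiv> Poly_Mapping.lookup"
abbreviation single where "single \<equiv> Poly_Mapping.single"
abbreviation keys where "keys \<equiv> Poly_Mapping.keys"

lemma poly_mapping_sum_single: "(P::'k \<Rightarrow>\<^sub>0 'b::comm_monoid_add) = (\<Sum>\<alpha>\<in>keys P. single \<alpha> (lookup P \<alpha>))"
  by (rule poly_mapping_eqI) (simp add: lookup_sum lookup_single when_def in_keys_iff sum.delta' )

definition total_degree :: "(nat \<Rightarrow>\<^sub>0 nat) \<Rightarrow> nat" where "total_degree a = sum (lookup a) (keys a)"

lemma total_degree_superset: "finite I \<Longrightarrow> keys a \<subseteq> I \<Longrightarrow> total_degree a = sum (lookup a) I"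
  unfolding total_degree_def by (rule sum.mono_neutral_left) (auto simp: in_keys_iff)

lemma total_degree_add [simp]: "total_degree (a + b) = total_degree a + total_degree b"
proof -
  have f: "finite (keys a \<union> keys b)" by simp
  have "total_degree (a+b) = sum (lookup (a+b)) (keys a \<union> keys b)"
    by (rule total_degree_superset[OF f]) (use keys_add[of a b] in blast)
  also have "\<dots> = sum (lookup a) (keys a \<union> keys b) + sum (lookup b) (keys a \<union> keys b)"
    by (simp add: lookup_add sum.distrib)
  also have "\<dots> = total_degree a + total_degree b" by (simp add: total_degree_superset[of "keys a \<union> keys b"])
  finally show ?thesis .
qed

lemma total_degree_zero [simp]: "total_degree 0 = 0" by (simp add: total_degree_def)
lemma total_degree_single [simp]: "total_degree (single i k) = k" by (simp add: total_degree_def)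

definition eval_monom :: "(nat \<Rightarrow> 'b::comm_semiring_1) \<Rightarrow> (nat \<Rightarrow>\<^sub>0 nat) \<Rightarrow> 'b" where
  "eval_monom \<sigma> a = (\<Prod>i\<in>keys a. \<sigma> i ^ lookup a i)"

lemma eval_monom_superset: "finite I \<Longrightarrow> keys a \<subseteq> I \<Longrightarrow> eval_monom \<sigma> a = (\<Prod>i\<in>I. \<sigma> i ^ lookup a i)"
  unfolding eval_monom_def by (rule prod.mono_neutral_left) (auto simp: in_keys_iff)

lemma eval_monom_add: "eval_monom \<sigma> (a + b) = eval_monom \<sigma> a * eval_monom \<sigma> b"
proof -
  have f: "finite (keys a \<union> keys b)" by simp
  have "eval_monom \<sigma> (a+b) = (\<Prod>i\<in>keys a \<union> keys b. \<sigma> i ^ lookup (a+b) i)"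
    by (rule eval_monom_superset[OF f]) (use keys_add[of a b] in blast)
  also have "\<dots> = (\<Prod>i\<in>keys a \<union> keys b. \<sigma> i ^ lookup a i) * (\<Prod>i\<in>keys a \<union> keys b. \<sigma> i ^ lookup b i)"
    by (simp add: lookup_add power_add prod.distrib)
  also have "\<dots> = eval_monom \<sigma> a * eval_monom \<sigma> b" by (simp add: eval_monom_superset[of "keys a \<union> keys b"])
  finally show ?thesis .
qed

lemma eval_monom_zero [simp]: "eval_monom \<sigma> 0 = 1" by (simp add: eval_monom_def)
lemma eval_monom_single [simp]: "eval_monom \<sigma> (single i k) = \<sigma> i ^ k"
  by (cases "k = 0") (simp_all add: eval_monom_def)

definition semiring_hom :: "('a::comm_semiring_1 \<Rightarrow> 'b::comm_semiring_1) \<Rightarrow> bool" where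
  "semiring_hom \<phi> \<longleftrightarrow> \<phi> 0 = 0 \<and> \<phi> 1 = 1 \<and> (\<forall>x y. \<phi> (x+y) = \<phi> x + \<phi> y) \<and> (\<forall>x y. \<phi> (x*y) = \<phi> x * \<phi> y)"

definition msubst :: "('a::comm_semiring_1 \<Rightarrow> 'b::comm_semiring_1) \<Rightarrow> (nat \<Rightarrow> 'b) \<Rightarrow> 'a mpoly \<Rightarrow> 'b" where
  "msubst \<phi> \<sigma> P = (\<Sum>a\<in>keys P. \<phi> (lookup P a) * eval_monom \<sigma> a)"

lemma msubst_superset: "\<phi> 0 = 0 \<Longrightarrow> finite I \<Longrightarrow> keys P \<subseteq> I \<Longrightarrow> msubst \<phi> \<sigma> P = (\<Sum>a\<in>I. \<phi> (lookup P a) * eval_monom \<sigma> a)"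
  unfolding msubst_def by (rule sum.mono_neutral_left) (auto simp: in_keys_iff)

lemma msubst_add: assumes "semiring_hom \<phi>" shows "msubst \<phi> \<sigma> (P + Q) = msubst \<phi> \<sigma> P + msubst \<phi> \<sigma> Q"
proof -
  have h: "\<phi> 0 = 0" "\<And>x y. \<phi> (x+y) = \<phi> x + \<phi> y" using assms by (auto simp: semiring_hom_def)
  have f: "finite (keys P \<union> keys Q)" by simp
  have "msubst \<phi> \<sigma> (P+Q) = (\<Sum>a\<in>keys P \<union> keys Q. \<phi> (lookup (P+Q) a) * eval_monom \<sigma> a)"
    using msubst_superset[of \<phi> "keys P \<union> keys Q" "P+Q"] h(1) keys_add[of P Q] by simp
  also have "\<dots> = (\<Sum>a\<in>keys P \<union> keys Q. \<phi> (lookup P a) * eval_monom \<sigma> a) + (\<Sum>a\<in>keys P \<union> keys Q. \<phi> (lookup Q a) * eval_monom \<sigma> a)"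
    by (simp add: lookup_add h(2) distrib_right sum.distrib)
  also have "\<dots> = msubst \<phi> \<sigma> P + msubst \<phi> \<sigma> Q" using msubst_superset[of \<phi> "keys P \<union> keys Q"] h(1) by auto
  finally show ?thesis .
qed

lemma msubst_zero [simp]: "msubst \<phi> \<sigma> 0 = 0" by (simp add: msubst_def)

lemma msubst_sum: assumes "semiring_hom \<phi>" shows "msubst \<phi> \<sigma> (sum F A) = (\<Sum>x\<in>A. msubst \<phi> \<sigma> (F x))"
  by (induction A rule: infinite_finite_induct) (simp_all add: msubst_add[OF assms])

lemma msubst_single: assumes "semiring_hom \<phi>" shows "msubst \<phi> \<sigma> (single a c) = \<phi> c * eval_monom \<sigma> a"
  using assms by (cases "c = 0") (simp_all add: msubst_def semiring_hom_def)

lemma msubst_mult: assumes "semiring_hom \<phi>" shows "msubst \<phi> \<sigma> (P * Q) = msubst \<phi> \<sigma> P * msubst \<phi> \<sigma> Q"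
proof -
  have m: "\<And>x y. \<phi> (x*y) = \<phi> x * \<phi> y" using assms by (auto simp: semiring_hom_def)
  have "P * Q = (\<Sum>a\<in>keys P. single a (lookup P a)) * (\<Sum>b\<in>keys Q. single b (lookup Q b))"
    using poly_mapping_sum_single[of P] poly_mapping_sum_single[of Q] by simp
  also have "\<dots> = (\<Sum>a\<in>keys P. \<Sum>b\<in>keys Q. single (a+b) (lookup P a * lookup Q b))"
    by (simp add: sum_product mult_single)
  finally have "msubst \<phi> \<sigma> (P*Q) = (\<Sum>a\<in>keys P. \<Sum>b\<in>keys Q. (\<phi> (lookup P a) * eval_monom \<sigma> a) * (\<phi> (lookup Q b) * eval_monom \<sigma> b))"
    by (simp add: msubst_sum[OF assms] msubst_single[OF assms] m eval_monom_add mult_ac)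
  also have "\<dots> = msubst \<phi> \<sigma> P * msubst \<phi> \<sigma> Q"
    by (simp add: msubst_def sum_product)
  finally show ?thesis .
qed

lemma msubst_one [simp]: assumes "semiring_hom \<phi>" shows "msubst \<phi> \<sigma> 1 = 1"
proof -
  have "(1::'a mpoly) = single 0 1" by simp
  then show ?thesis using msubst_single[OF assms, of \<sigma> 0 1] assms by (simp add: semiring_hom_def)
qed

definition mconst :: "'a::comm_semiring_1 \<Rightarrow> 'a mpoly" where "mconst c = single 0 c"
definition mvar :: "nat \<Rightarrow> 'a::comm_semiring_1 mpoly" where "mvar i = single (single i 1) 1"

lemma semiring_hom_mconst: "semiring_hom mconst"
  by (simp add: semiring_hom_def mconst_def single_add mult_single)

lemma semiring_hom_id: "semiring_hom id" by (simp add: semiring_hom_def)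

lemma msubst_mconst: "semiring_hom \<phi> \<Longrightarrow> msubst \<phi> \<sigma> (mconst c) = \<phi> c"
  by (simp add: mconst_def msubst_single)
lemma msubst_mvar: "semiring_hom \<phi> \<Longrightarrow> msubst \<phi> \<sigma> (mvar i) = \<sigma> i"
  by (simp add: mvar_def msubst_single semiring_hom_def)

lemma semiring_hom_msubst: "semiring_hom \<phi> \<Longrightarrow> semiring_hom (msubst \<phi> \<sigma>)"
  unfolding semiring_hom_def using msubst_add msubst_mult msubst_one by (metis semiring_hom_def msubst_zero)

lemma semiring_hom_comp: "semiring_hom \<phi> \<Longrightarrow> semiring_hom \<psi> \<Longrightarrow> semiring_hom (\<psi> \<circ> \<phi>)"
  by (simp add: semiring_hom_def)

lemma eval_monom_semiring_hom: "semiring_hom \<psi> \<Longrightarrow> \<psi> (eval_monom \<sigma> a) = eval_monom (\<psi> \<circ> \<sigma>) a"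
proof -
  assume h: "semiring_hom \<psi>"
  have p: "\<psi> (x ^ k) = \<psi> x ^ k" for x k by (induction k) (use h in \<open>simp_all add: semiring_hom_def\<close>)
  have "\<psi> (prod F A) = (\<Prod>x\<in>A. \<psi> (F x))" for F and A :: "nat set"
    by (induction A rule: infinite_finite_induct) (use h in \<open>simp_all add: semiring_hom_def\<close>)
  then show ?thesis by (simp add: eval_monom_def p)
qed

lemma semiring_hom_sum: "semiring_hom \<psi> \<Longrightarrow> \<psi> (sum F A) = (\<Sum>x\<in>A. \<psi> (F x))"
  by (induction A rule: infinite_finite_induct) (simp_all add: semiring_hom_def)

lemma msubst_comp: assumes "semiring_hom \<phi>" "semiring_hom \<psi>"
  shows "\<psi> (msubst \<phi> \<sigma> P) = msubst (\<psi> \<circ> \<phi>) (\<psi> \<circ> \<sigma>) P"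
proof -
  have m: "\<And>x y. \<psi> (x*y) = \<psi> x * \<psi> y" using assms(2) by (auto simp: semiring_hom_def)
  show ?thesis unfolding msubst_def
    by (simp add: semiring_hom_sum[OF assms(2)] m eval_monom_semiring_hom[OF assms(2)])
qed

lemma lookup_map_poly_mapping: "f 0 = 0 \<Longrightarrow> lookup (Poly_Mapping.map f p) k = f (lookup p k)"
  by transfer (auto simp: when_def)

lemma keys_map_subset: "keys (Poly_Mapping.map f p) \<subseteq> keys p"
  by transfer (auto simp: when_def)

lemma lookup_mconst_mult: "lookup (mconst c * P) b = c * lookup P b"
proof -
  have "mconst c * P = Poly_Mapping.map ((*) c) P"
    by (simp add: mconst_def mult_map_scale_conv_mult)
  then show ?thesis by (simp add: lookup_map_poly_mapping)
qed

lemma mconst_add: "mconst (x + y) = mconst x + mconst y" by (simp add: mconst_def single_add)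
lemma mconst_mult: "mconst (x * y) = mconst x * mconst y" by (simp add: mconst_def mult_single)
lemma mconst_0 [simp]: "mconst 0 = 0" by (simp add: mconst_def)
lemma mconst_1 [simp]: "mconst 1 = 1" by (simp add: mconst_def)
lemma mconst_power: "mconst (x ^ k) = mconst x ^ k" by (induction k) (simp_all add: mconst_mult)
lemma mconst_inject: "mconst x = mconst y \<longleftrightarrow> x = y"
  by (metis mconst_def lookup_single_eq)

lemma mvar_power: "(mvar i :: 'a::comm_semiring_1 mpoly) ^ k = single (single i k) 1"
proof (induction k)
  case 0 then show ?case by simp
next
  case (Suc k)
  have "(mvar i :: 'a mpoly) ^ Suc k = mvar i * mvar i ^ k" by simp
  also have "\<dots> = mvar i * single (single i k) 1" using Suc.IH by simp
  also have "\<dots> = single (single i (Suc k)) 1" unfolding mvar_def mult_single by (simp add: single_add[symmetric])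
  finally show ?case .
qed

lemma prod_single: "(\<Prod>i\<in>J. single (b i) (c i)) = single (\<Sum>i\<in>J. b i) (\<Prod>i\<in>J. c i)"
  by (induction J rule: infinite_finite_induct) (simp_all add: mult_single)

definition monom_restrict :: "(nat \<Rightarrow>\<^sub>0 nat) \<Rightarrow> nat set \<Rightarrow> (nat \<Rightarrow>\<^sub>0 nat)" where
  "monom_restrict a I = (\<Sum>i\<in>keys a \<inter> I. single i (lookup a i))"

lemma lookup_monom_restrict: "lookup (monom_restrict a I) i = (if i \<in> I then lookup a i else 0)"
  unfolding monom_restrict_def by (simp add: lookup_sum lookup_single when_def sum.delta' in_keys_iff)

lemma keys_monom_restrict: "keys (monom_restrict a I) = keys a \<inter> I"
  by (auto simp: in_keys_iff lookup_monom_restrict split: if_splits)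

lemma monom_split_last: "keys a \<subseteq> {..<Suc r} \<Longrightarrow> a = monom_restrict a {..<r} + single r (lookup a r)"
proof (rule poly_mapping_eqI)
  fix i assume a: "keys a \<subseteq> {..<Suc r}"
  have "i > r \<Longrightarrow> lookup a i = 0" using a by (auto simp: in_keys_iff)
  then show "lookup a i = lookup (monom_restrict a {..<r} + single r (lookup a r)) i"
    by (cases "i < r"; cases "i = r") (auto simp: lookup_add lookup_monom_restrict lookup_single)
qed

lemma monom_restrict_last: "keys g \<subseteq> {..<r} \<Longrightarrow> monom_restrict (g + single r j) {..<r} = g \<and> lookup (g + single r j) r = j"
proof
  assume g: "keys g \<subseteq> {..<r}"
  then have gr: "lookup g r = 0" by (auto simp: in_keys_iff)
  show "monom_restrict (g + single r j) {..<r} = g"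
  proof (rule poly_mapping_eqI)
    fix i show "lookup (monom_restrict (g + single r j) {..<r}) i = lookup g i"
      using g by (auto simp: lookup_monom_restrict lookup_add lookup_single in_keys_iff)
  qed
  show "lookup (g + single r j) r = j" using gr by (simp add: lookup_add)
qed

lemma monom_restrict_UNIV [simp]: "monom_restrict a UNIV = a"
  by (rule poly_mapping_eqI) (simp add: lookup_monom_restrict)

lemma eval_monom_mvar_mconst:
  assumes "\<And>i. \<sigma> i = (if i \<in> I then mvar i else mconst (g i))"
  shows "eval_monom \<sigma> a = single (monom_restrict a I) (\<Prod>i\<in>keys a - I. g i ^ lookup a i)"
proof -
  have "eval_monom \<sigma> a = (\<Prod>i\<in>keys a \<inter> I. \<sigma> i ^ lookup a i) * (\<Prod>i\<in>keys a - I. \<sigma> i ^ lookup a i)"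
    unfolding eval_monom_def by (rule prod.Int_Diff) simp
  also have "(\<Prod>i\<in>keys a \<inter> I. \<sigma> i ^ lookup a i) = (\<Prod>i\<in>keys a \<inter> I. single (single i (lookup a i)) 1)"
    by (rule prod.cong) (simp_all add: assms mvar_power)
  also have "\<dots> = single (monom_restrict a I) 1" by (simp add: prod_single monom_restrict_def)
  also have "(\<Prod>i\<in>keys a - I. \<sigma> i ^ lookup a i) = (\<Prod>i\<in>keys a - I. mconst (g i ^ lookup a i))"
    by (rule prod.cong) (simp_all add: assms mconst_power)
  also have "\<dots> = single 0 (\<Prod>i\<in>keys a - I. g i ^ lookup a i)" by (simp add: mconst_def prod_single)
  finally show ?thesis by (simp add: mult_single)
qed

lemma eval_monom_mvar: "eval_monom mvar a = single a 1"
  using eval_monom_mvar_mconst[of mvar UNIV] by simp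

lemma msubst_mconst_mvar [simp]: "msubst mconst mvar P = P"
proof -
  have "msubst mconst mvar P = (\<Sum>a\<in>keys P. single a (lookup P a))"
    unfolding msubst_def by (rule sum.cong) (simp_all add: eval_monom_mvar mconst_def mult_single)
  then show ?thesis using poly_mapping_sum_single[of P] by simp
qed

lemma msubst_cong: "(\<And>a i. a \<in> keys P \<Longrightarrow> i \<in> keys a \<Longrightarrow> \<sigma> i = \<sigma>' i) \<Longrightarrow> msubst \<phi> \<sigma> P = msubst \<phi> \<sigma>' P"
  unfolding msubst_def eval_monom_def by (intro sum.cong refl arg_cong2[where f="(*)"] prod.cong) auto

definition translate :: "(nat \<Rightarrow> 'a::comm_ring_1) \<Rightarrow> 'a mpoly \<Rightarrow> 'a mpoly" where
  "translate p P = msubst mconst (\<lambda>i. mconst (p i) + mvar i) P"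

lemma translate_translate: "translate q (translate p P) = translate (\<lambda>i. p i + q i) P"
proof -
  have "translate q (translate p P) = msubst (translate q \<circ> mconst) (translate q \<circ> (\<lambda>i. mconst (p i) + mvar i)) P"
    unfolding translate_def by (rule msubst_comp[OF semiring_hom_mconst semiring_hom_msubst[OF semiring_hom_mconst]])
  also have "\<dots> = translate (\<lambda>i. p i + q i) P"
    unfolding translate_def
    by (simp add: o_def msubst_mconst[OF semiring_hom_mconst] msubst_add[OF semiring_hom_mconst] msubst_mvar[OF semiring_hom_mconst] mconst_add add_ac)
  finally show ?thesis .
qed

lemma translate_0: "translate (\<lambda>i. 0) P = P" by (simp add: translate_def)

lemma translate_eq_0D: "translate p P = 0 \<Longrightarrow> P = (0::'a::comm_ring_1 mpoly)"
proof -
  assume "translate p P = 0"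
  then have "translate (\<lambda>i. - p i) (translate p P) = 0" by (simp add: translate_def)
  then show ?thesis by (simp add: translate_translate translate_0)
qed

definition vars_less :: "nat \<Rightarrow> 'a::zero mpoly \<Rightarrow> bool" where "vars_less k P \<longleftrightarrow> (\<forall>b\<in>keys P. keys b \<subseteq> {..<k})"

lemma vars_less_add: "vars_less k P \<Longrightarrow> vars_less k Q \<Longrightarrow> vars_less k (P + Q)"
  unfolding vars_less_def using keys_add[of P Q] by (meson Un_iff subsetD)
lemma vars_less_mult: assumes "vars_less k P" "vars_less k Q" shows "vars_less k ((P::'a::comm_semiring_1 mpoly) * Q)"
  unfolding vars_less_def
proof
  fix b assume "b \<in> keys (P * Q)"
  then obtain a c where b: "b = a + c" "a \<in> keys P" "c \<in> keys Q" using keys_mult[of P Q] by blast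
  have "keys b \<subseteq> keys a \<union> keys c" using b(1) keys_add[of a c] by simp
  moreover have "keys a \<subseteq> {..<k}" "keys c \<subseteq> {..<k}" using assms b unfolding vars_less_def by auto
  ultimately show "keys b \<subseteq> {..<k}" by blast
qed
lemma vars_less_0 [simp]: "vars_less k 0" by (simp add: vars_less_def)
lemma vars_less_1 [simp]: "vars_less k (1::'a::comm_semiring_1 mpoly)" by (simp add: vars_less_def)
lemma vars_less_mconst [simp]: "vars_less k (mconst c)" by (simp add: vars_less_def mconst_def)
lemma vars_less_mvar: "i < k \<Longrightarrow> vars_less k (mvar i)" by (simp add: vars_less_def mvar_def)
lemma vars_less_sum: "(\<And>x. x \<in> A \<Longrightarrow> vars_less k (f x)) \<Longrightarrow> vars_less k (sum f A)"
  by (induction A rule: infinite_finite_induct) (simp_all add: vars_less_add)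
lemma vars_less_prod: "(\<And>x. x \<in> A \<Longrightarrow> vars_less k (f x)) \<Longrightarrow> vars_less k ((prod f A) :: 'a::comm_semiring_1 mpoly)"
  by (induction A rule: infinite_finite_induct) (simp_all add: vars_less_mult)
lemma vars_less_power: "vars_less k P \<Longrightarrow> vars_less k ((P::'a::comm_semiring_1 mpoly) ^ j)"
  by (induction j) (simp_all add: vars_less_mult)

lemma vars_less_msubst: assumes "semiring_hom \<phi>" "vars_less k P" "\<And>i. i < k \<Longrightarrow> vars_less k (\<sigma> i)"
  shows "vars_less k (msubst (mconst \<circ> \<phi>) \<sigma> P)"
  unfolding msubst_def eval_monom_def
proof (intro vars_less_sum vars_less_mult vars_less_prod vars_less_power)
  fix a i assume "a \<in> keys P" "i \<in> keys a"
  then have "i < k" using assms(2) unfolding vars_less_def by blast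
  then show "vars_less k (\<sigma> i)" using assms(3) by blast
qed simp

lemma vars_less_translate: "vars_less k P \<Longrightarrow> vars_less k (translate p P)"
  unfolding translate_def using vars_less_msubst[OF semiring_hom_id, of k P] by (simp add: vars_less_add vars_less_mvar)

section \<open>Counting monomials\<close>

definition monoms :: "nat \<Rightarrow> nat \<Rightarrow> (nat \<Rightarrow>\<^sub>0 nat) set" where
  "monoms k D = {a. keys a \<subseteq> {..<k} \<and> total_degree a \<le> D}"

lemma sum_binomial_diff: "(\<Sum>j\<le>D. (D - j + k) choose k) = (D + Suc k) choose Suc k"
proof -
  have "(\<Sum>j\<le>D. (D - j + k) choose k) = (\<Sum>i\<le>D. (k + i) choose i)"
  proof (rule sum.reindex_bij_witness[of _ "\<lambda>i. D - i" "\<lambda>j. D - j"])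
    fix j assume "j \<in> {..D}"
    then show "(k + (D - j)) choose (D - j) = (D - j + k) choose k"
      using binomial_symmetric[of k "D - j + k"] by (simp add: add.commute)
  qed auto
  also have "\<dots> = Suc (k + D) choose D" by (rule sum_choose_lower)
  also have "\<dots> = (D + Suc k) choose Suc k"
    using binomial_symmetric[of D "Suc (k + D)"] by (simp add: add.commute del: binomial_Suc_Suc)
  finally show ?thesis .
qed

lemma monoms_Suc:
  "monoms (Suc k) D = (\<lambda>(j, b). b + single k j) ` (SIGMA j:{..D}. monoms k (D - j))"
proof (intro subset_antisym subsetI)
  fix a assume a: "a \<in> monoms (Suc k) D"
  then have ab: "a = monom_restrict a {..<k} + single k (lookup a k)"
    by (intro monom_split_last) (simp add: monoms_def)
  then have "total_degree a = total_degree (monom_restrict a {..<k}) + lookup a k"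
    by (metis total_degree_add total_degree_single)
  then have "monom_restrict a {..<k} \<in> monoms k (D - lookup a k)" "lookup a k \<le> D"
    using a by (auto simp: monoms_def keys_monom_restrict)
  then show "a \<in> (\<lambda>(j, b). b + single k j) ` (SIGMA j:{..D}. monoms k (D - j))"
    using ab by force
qed (use keys_add in \<open>fastforce simp: monoms_def split: if_splits\<close>)

lemma inj_on_monoms_Suc: "inj_on (\<lambda>(j, b). b + single k j) (SIGMA j:{..D}. monoms k (D - j))"
proof (rule inj_onI, clarsimp)
  fix j b j' b' assume "b \<in> monoms k (D - j)" "b' \<in> monoms k (D - j')" "b + single k j = b' + single k j'"
  then show "j = j' \<and> b = b'" using monom_restrict_last by (metis monoms_def mem_Collect_eq)
qed

lemma monoms_card: "finite (monoms k D) \<and> card (monoms k D) = (D + k) choose k"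
proof (induction k arbitrary: D)
  case 0
  have "monoms 0 D = {0}" by (auto simp: monoms_def)
  then show ?case by simp
next
  case (Suc k)
  have "card (monoms (Suc k) D) = card (SIGMA j:{..D}. monoms k (D - j))"
    unfolding monoms_Suc by (rule card_image[OF inj_on_monoms_Suc])
  also have "\<dots> = (\<Sum>j\<le>D. (D - j + k) choose k)" using Suc by (simp add: card_SigmaI)
  also have "\<dots> = (D + Suc k) choose Suc k" by (rule sum_binomial_diff)
  finally show ?case using Suc by (simp add: monoms_Suc)
qed

section \<open>Polynomials vanishing to high order on a finite set\<close>

text \<open>One step of Gaussian elimination, pivoting on the entry \<open>w e u\<^sub>0\<close>.\<close>

lemma homogeneous_linear_system_pivot:
  fixes w :: "'e \<Rightarrow> 'u \<Rightarrow> 'a::field"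
  assumes U: "finite U" "u0 \<in> U" and piv: "w e u0 \<noteq> 0"
    and sol: "\<forall>x\<in>E. (\<Sum>u\<in>U - {u0}. (w x u - w x u0 / w e u0 * w e u) * c' u) = 0"
  defines "c \<equiv> c'(u0 := - (\<Sum>v\<in>U - {u0}. w e v * c' v) / w e u0)"
  shows "\<forall>x\<in>insert e E. (\<Sum>u\<in>U. w x u * c u) = 0"
proof
  have split: "(\<Sum>u\<in>U. w x u * c u) = w x u0 * c u0 + (\<Sum>u\<in>U - {u0}. w x u * c' u)" for x
  proof -
    have "(\<Sum>u\<in>U. w x u * c u) = w x u0 * c u0 + (\<Sum>u\<in>U - {u0}. w x u * c u)"
      using U by (simp add: sum.remove)
    also have "(\<Sum>u\<in>U - {u0}. w x u * c u) = (\<Sum>u\<in>U - {u0}. w x u * c' u)"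
      by (rule sum.cong) (auto simp: c_def)
    finally show ?thesis .
  qed
  fix x assume x: "x \<in> insert e E"
  show "(\<Sum>u\<in>U. w x u * c u) = 0"
  proof (cases "x = e")
    case True
    have "w e u0 * c u0 + (\<Sum>u\<in>U - {u0}. w e u * c' u) = 0" using piv by (simp add: c_def)
    then show ?thesis using True split by simp
  next
    case False
    then have "0 = (\<Sum>u\<in>U - {u0}. (w x u - w x u0 / w e u0 * w e u) * c' u)" using sol x by simp
    also have "\<dots> = (\<Sum>u\<in>U - {u0}. w x u * c' u) - w x u0 / w e u0 * (\<Sum>u\<in>U - {u0}. w e u * c' u)"
      by (simp add: algebra_simps sum_subtractf sum_distrib_left)
    also have "\<dots> = w x u0 * c u0 + (\<Sum>u\<in>U - {u0}. w x u * c' u)"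
      using piv by (simp add: c_def field_simps)
    also have "\<dots> = (\<Sum>u\<in>U. w x u * c u)" by (rule split[symmetric])
    finally show ?thesis by simp
  qed
qed

lemma homogeneous_linear_system_solvable:
  fixes w :: "'e \<Rightarrow> 'u \<Rightarrow> 'a::field"
  assumes "finite E" "finite U" "card E < card U"
  shows "\<exists>c. (\<exists>u\<in>U. c u \<noteq> 0) \<and> (\<forall>e\<in>E. (\<Sum>u\<in>U. w e u * c u) = 0)"
  using assms
proof (induction E arbitrary: U w rule: finite_induct)
  case empty
  then have "U \<noteq> {}" by auto
  then show ?case by (intro exI[of _ "\<lambda>_. 1"]) auto
next
  case (insert e E)
  show ?case
  proof (cases "\<forall>u\<in>U. w e u = 0")
    case True
    obtain c where "\<exists>u\<in>U. c u \<noteq> 0" "\<forall>e\<in>E. (\<Sum>u\<in>U. w e u * c u) = 0"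
      using insert.IH[of U w] insert.prems insert.hyps by auto
    then show ?thesis using True by (intro exI[of _ c]) auto
  next
    case False
    then obtain u0 where u0: "u0 \<in> U" "w e u0 \<noteq> 0" by auto
    have "card E < card (U - {u0})" using insert.prems insert.hyps u0 by simp
    then obtain c' where c': "\<exists>u\<in>U - {u0}. c' u \<noteq> 0"
      "\<forall>x\<in>E. (\<Sum>u\<in>U - {u0}. (w x u - w x u0 / w e u0 * w e u) * c' u) = 0"
      using insert.IH[of "U - {u0}" "\<lambda>x u. w x u - w x u0 / w e u0 * w e u"] insert.prems by auto
    from c'(1) obtain u1 where "u1 \<in> U" "u1 \<noteq> u0" "c' u1 \<noteq> 0" by auto
    then show ?thesis using homogeneous_linear_system_pivot[OF insert.prems(1) u0 c'(2)]
      by (intro exI[of _ "c'(u0 := - (\<Sum>v\<in>U - {u0}. w e v * c' v) / w e u0)"]) auto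
  qed
qed

text \<open>Vanishing to order \<open>M\<close> at \<open>p\<close> means that the coefficients of \<open>f(p + y)\<close> of degree
  \<open>\<le> M\<close> are zero: one linear condition on the coefficients of \<open>f\<close> per point and monomial.\<close>

lemma exists_mpoly_vanishing_to_order:
  fixes S :: "(nat \<Rightarrow> 'a::field) set"
  assumes "finite S" "card S * card (monoms n M) < card (monoms n D)"
  shows "\<exists>f. f \<noteq> 0 \<and> keys f \<subseteq> monoms n D \<and> (\<forall>p\<in>S. \<forall>b. total_degree b \<le> M \<longrightarrow> lookup (translate p f) b = 0)"
proof -
  let ?E = "S \<times> monoms n M" and ?U = "monoms n D"
  define w where "w = (\<lambda>(p, b) a. lookup (eval_monom (\<lambda>i. mconst (p i) + mvar i) a) b :: 'a)"
  have "finite ?E" "finite ?U" "card ?E < card ?U"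
    using assms monoms_card by (auto simp: card_cartesian_product)
  then obtain c where c: "\<exists>u\<in>?U. c u \<noteq> 0" "\<forall>e\<in>?E. (\<Sum>u\<in>?U. w e u * c u) = 0"
    using homogeneous_linear_system_solvable[of ?E ?U w] by blast
  define f where "f = (\<Sum>a\<in>?U. single a (c a))"
  have finU: "finite ?U" using monoms_card by auto
  have lookup_f: "lookup f a = (if a \<in> ?U then c a else 0)" for a
    unfolding f_def using finU by (simp add: lookup_sum lookup_single when_def sum.delta')
  have keys_f: "keys f \<subseteq> ?U" by (auto simp: in_keys_iff lookup_f split: if_splits)
  have "f \<noteq> 0" using c(1) lookup_f by (metis lookup_zero)
  moreover have "\<forall>p\<in>S. \<forall>b. total_degree b \<le> M \<longrightarrow> lookup (translate p f) b = 0"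
  proof (intro ballI allI impI)
    fix p b assume p: "p \<in> S" and b: "total_degree b \<le> M"
    show "lookup (translate p f) b = 0"
    proof (cases "keys b \<subseteq> {..<n}")
      case True
      have "translate p f = (\<Sum>a\<in>?U. mconst (c a) * eval_monom (\<lambda>i. mconst (p i) + mvar i) a)"
        unfolding translate_def f_def by (simp add: msubst_sum[OF semiring_hom_mconst] msubst_single[OF semiring_hom_mconst])
      then have "lookup (translate p f) b = (\<Sum>a\<in>?U. w (p, b) a * c a)"
        by (simp add: lookup_sum lookup_mconst_mult w_def mult.commute)
      also have "\<dots> = 0" using c(2) p b True by (auto simp: monoms_def)
      finally show ?thesis .
    next
      case False
      have "vars_less n f" using keys_f by (auto simp: vars_less_def monoms_def)
      then have "vars_less n (translate p f)" by (rule vars_less_translate)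
      then have "b \<notin> keys (translate p f)" using False by (auto simp: vars_less_def)
      then show ?thesis by (simp add: in_keys_iff)
    qed
  qed
  ultimately show ?thesis using keys_f by blast
qed

section \<open>Multivariate polynomials with univariate polynomial coefficients\<close>

definition pow_dvd_coeffs :: "'b::comm_semiring_1 \<Rightarrow> nat \<Rightarrow> 'b mpoly \<Rightarrow> bool" where
  "pow_dvd_coeffs \<tau> k P \<longleftrightarrow> (\<forall>g. \<tau> ^ (k - total_degree g) dvd lookup P g)"

lemma pow_dvd_coeffs_add: "pow_dvd_coeffs \<tau> k P \<Longrightarrow> pow_dvd_coeffs \<tau> k Q \<Longrightarrow> pow_dvd_coeffs \<tau> k (P + Q)"
  by (simp add: pow_dvd_coeffs_def lookup_add)
lemma pow_dvd_coeffs_0 [simp]: "pow_dvd_coeffs \<tau> k 0" by (simp add: pow_dvd_coeffs_def)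
lemma pow_dvd_coeffs_sum: "(\<And>x. x \<in> A \<Longrightarrow> pow_dvd_coeffs \<tau> k (f x)) \<Longrightarrow> pow_dvd_coeffs \<tau> k (sum f A)"
  by (induction A rule: infinite_finite_induct) (simp_all add: pow_dvd_coeffs_add)
lemma pow_dvd_coeffs_mono: "j \<le> k \<Longrightarrow> pow_dvd_coeffs \<tau> k P \<Longrightarrow> pow_dvd_coeffs \<tau> j P"
  unfolding pow_dvd_coeffs_def by (meson diff_le_mono dvd_trans le_imp_power_dvd)
lemma pow_dvd_coeffs_k0 [simp]: "pow_dvd_coeffs \<tau> 0 P" by (simp add: pow_dvd_coeffs_def)
lemma pow_dvd_coeffs_single: "\<tau> ^ (k - total_degree a) dvd x \<Longrightarrow> pow_dvd_coeffs \<tau> k (single a x)"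
  by (simp add: pow_dvd_coeffs_def lookup_single when_def)

lemma pow_dvd_coeffs_mult: assumes "pow_dvd_coeffs \<tau> k P" "pow_dvd_coeffs \<tau> l Q" shows "pow_dvd_coeffs \<tau> (k + l) (P * Q)"
proof -
  have "P * Q = (\<Sum>a\<in>keys P. single a (lookup P a)) * (\<Sum>b\<in>keys Q. single b (lookup Q b))"
    using poly_mapping_sum_single[of P] poly_mapping_sum_single[of Q] by simp
  also have "\<dots> = (\<Sum>a\<in>keys P. \<Sum>b\<in>keys Q. single (a+b) (lookup P a * lookup Q b))"
    by (simp add: sum_product mult_single)
  finally have e: "P * Q = \<dots>" .
  show ?thesis unfolding e
  proof (intro pow_dvd_coeffs_sum pow_dvd_coeffs_single)
    fix a b
    have "\<tau> ^ (k - total_degree a) dvd lookup P a" "\<tau> ^ (l - total_degree b) dvd lookup Q b"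
      using assms by (auto simp: pow_dvd_coeffs_def)
    then have "\<tau> ^ ((k - total_degree a) + (l - total_degree b)) dvd lookup P a * lookup Q b"
      by (simp add: power_add mult_dvd_mono)
    moreover have "\<tau> ^ (k + l - total_degree (a + b)) dvd \<tau> ^ ((k - total_degree a) + (l - total_degree b))"
      by (rule le_imp_power_dvd) simp
    ultimately show "\<tau> ^ (k + l - total_degree (a + b)) dvd lookup P a * lookup Q b"
      using dvd_trans by blast
  qed
qed

lemma pow_dvd_coeffs_one [simp]: "pow_dvd_coeffs \<tau> 0 1" by simp

lemma pow_dvd_coeffs_prod: "(\<And>i. i \<in> I \<Longrightarrow> pow_dvd_coeffs \<tau> (k i) (P i)) \<Longrightarrow> pow_dvd_coeffs \<tau> (sum k I) (prod P I)"
  by (induction I rule: infinite_finite_induct) (simp_all add: pow_dvd_coeffs_mult)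

lemma pow_dvd_coeffs_power: "pow_dvd_coeffs \<tau> k P \<Longrightarrow> pow_dvd_coeffs \<tau> (k * j) (P ^ j)"
proof (induction j)
  case 0 then show ?case by simp
next
  case (Suc j)
  then have "pow_dvd_coeffs \<tau> (k + k * j) (P * P ^ j)" by (intro pow_dvd_coeffs_mult) auto
  then show ?case by (simp add: algebra_simps)
qed

lemma pow_dvd_coeffs_eval_monom: assumes "\<And>i. pow_dvd_coeffs \<tau> 1 (\<rho> i)" shows "pow_dvd_coeffs \<tau> (total_degree a) (eval_monom \<rho> a)"
proof -
  have "pow_dvd_coeffs \<tau> (\<Sum>i\<in>keys a. lookup a i) (\<Prod>i\<in>keys a. \<rho> i ^ lookup a i)"
  proof (rule pow_dvd_coeffs_prod)
    fix i show "pow_dvd_coeffs \<tau> (lookup a i) (\<rho> i ^ lookup a i)" using pow_dvd_coeffs_power[OF assms, of "lookup a i"] by simp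
  qed
  then show ?thesis by (simp add: eval_monom_def total_degree_def)
qed

lemma pow_dvd_coeffs_msubst:
  assumes "semiring_hom \<phi>" "\<And>i. pow_dvd_coeffs \<tau> 1 (\<rho> i)" "\<And>a. a \<in> keys G \<Longrightarrow> m \<le> total_degree a"
  shows "pow_dvd_coeffs \<tau> m (msubst (mconst \<circ> \<phi>) \<rho> G)"
  unfolding msubst_def
proof (rule pow_dvd_coeffs_sum)
  fix a assume a: "a \<in> keys G"
  have "pow_dvd_coeffs \<tau> (0 + total_degree a) ((mconst \<circ> \<phi>) (lookup G a) * eval_monom \<rho> a)"
    by (rule pow_dvd_coeffs_mult) (simp, rule pow_dvd_coeffs_eval_monom[OF assms(2)])
  then show "pow_dvd_coeffs \<tau> m ((mconst \<circ> \<phi>) (lookup G a) * eval_monom \<rho> a)"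
    using pow_dvd_coeffs_mono assms(3)[OF a] by simp
qed

definition coeffs_degree_le :: "nat \<Rightarrow> 'a::comm_ring_1 poly mpoly \<Rightarrow> bool" where
  "coeffs_degree_le k P \<longleftrightarrow> (\<forall>g. degree (lookup P g) \<le> k)"

definition top_coeffs :: "nat \<Rightarrow> 'a::comm_ring_1 poly mpoly \<Rightarrow> 'a mpoly" where
  "top_coeffs k P = Poly_Mapping.map (\<lambda>q. coeff q k) P"

lemma lookup_top_coeffs: "lookup (top_coeffs k P) g = coeff (lookup P g) k"
  by (simp add: top_coeffs_def lookup_map_poly_mapping)

lemma top_coeffs_add: "top_coeffs k (P + Q) = top_coeffs k P + top_coeffs k Q"
  by (rule poly_mapping_eqI) (simp add: lookup_top_coeffs lookup_add)
lemma top_coeffs_0 [simp]: "top_coeffs k 0 = 0"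
  by (rule poly_mapping_eqI) (simp add: lookup_top_coeffs)
lemma top_coeffs_sum: "top_coeffs k (sum f A) = (\<Sum>x\<in>A. top_coeffs k (f x))"
  by (induction A rule: infinite_finite_induct) (simp_all add: top_coeffs_add)
lemma top_coeffs_single: "top_coeffs k (single a x) = single a (coeff x k)"
  by (rule poly_mapping_eqI) (simp add: lookup_top_coeffs lookup_single when_def)
lemma keys_top_coeffs: "keys (top_coeffs k P) \<subseteq> keys P"
  unfolding top_coeffs_def by (rule keys_map_subset)

lemma coeffs_degree_le_add: "coeffs_degree_le k P \<Longrightarrow> coeffs_degree_le k Q \<Longrightarrow> coeffs_degree_le k (P + Q)"
  unfolding coeffs_degree_le_def by (simp add: lookup_add degree_add_le)
lemma coeffs_degree_le_0 [simp]: "coeffs_degree_le k 0" by (simp add: coeffs_degree_le_def)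
lemma coeffs_degree_le_sum: "(\<And>x. x \<in> A \<Longrightarrow> coeffs_degree_le k (f x)) \<Longrightarrow> coeffs_degree_le k (sum f A)"
  by (induction A rule: infinite_finite_induct) (simp_all add: coeffs_degree_le_add)
lemma coeffs_degree_le_mono: "k \<le> j \<Longrightarrow> coeffs_degree_le k P \<Longrightarrow> coeffs_degree_le j P"
  unfolding coeffs_degree_le_def using le_trans by blast
lemma top_coeffs_beyond: assumes "coeffs_degree_le k P" "k < j" shows "top_coeffs j P = 0"
proof (rule poly_mapping_eqI)
  fix g have "degree (lookup P g) < j" using assms unfolding coeffs_degree_le_def by (meson le_less_trans)
  then show "lookup (top_coeffs j P) g = lookup 0 g" by (simp add: lookup_top_coeffs coeff_eq_0)
qed
lemma coeffs_degree_le_single: "degree x \<le> k \<Longrightarrow> coeffs_degree_le k (single a x)"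
  by (simp add: coeffs_degree_le_def lookup_single when_def)

lemma coeff_mult_at_degree_bounds:
  fixes p q :: "'a::comm_ring_1 poly"
  assumes "degree p \<le> k" "degree q \<le> l"
  shows "coeff (p * q) (k + l) = coeff p k * coeff q l"
proof -
  have z: "(\<Sum>i\<in>{..k+l} - {k}. coeff p i * coeff q (k + l - i)) = 0"
  proof (rule sum.neutral, rule ballI)
    fix i assume "i \<in> {..k+l} - {k}"
    then have "i \<le> k + l" "i \<noteq> k" by auto
    then show "coeff p i * coeff q (k + l - i) = 0"
      using assms by (cases "i < k") (auto simp: coeff_eq_0)
  qed
  have "coeff (p * q) (k + l) = (\<Sum>i\<le>k+l. coeff p i * coeff q (k + l - i))"
    by (rule coeff_mult)
  also have "\<dots> = coeff p k * coeff q (k + l - k) + (\<Sum>i\<in>{..k+l} - {k}. coeff p i * coeff q (k + l - i))"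
    by (rule sum.remove) auto
  finally show ?thesis using z by simp
qed

lemma top_coeffs_single_mult:
  fixes x y :: "'a::comm_ring_1 poly"
  assumes "degree x \<le> k" "degree y \<le> l"
  shows "coeffs_degree_le (k + l) (single a x * single b y) \<and> top_coeffs (k + l) (single a x * single b y) = top_coeffs k (single a x) * top_coeffs l (single b y)"
  using assms degree_mult_le[of x y]
  by (auto simp: mult_single top_coeffs_single coeff_mult_at_degree_bounds intro!: coeffs_degree_le_single)

lemma top_coeffs_mult:
  assumes "coeffs_degree_le k P" "coeffs_degree_le l Q"
  shows "coeffs_degree_le (k + l) (P * Q) \<and> top_coeffs (k + l) (P * Q) = top_coeffs k P * top_coeffs l Q"
proof -
  have e: "P * Q = (\<Sum>a\<in>keys P. \<Sum>b\<in>keys Q. single a (lookup P a) * single b (lookup Q b))"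
    using poly_mapping_sum_single[of P] poly_mapping_sum_single[of Q] by (metis (no_types) sum_product)
  have d: "degree (lookup P a) \<le> k" "degree (lookup Q b) \<le> l" for a b using assms by (auto simp: coeffs_degree_le_def)
  have D: "coeffs_degree_le (k + l) (P * Q)" unfolding e
    by (intro coeffs_degree_le_sum) (use top_coeffs_single_mult[OF d] in blast)
  have "top_coeffs (k + l) (P * Q) = (\<Sum>a\<in>keys P. \<Sum>b\<in>keys Q. top_coeffs k (single a (lookup P a)) * top_coeffs l (single b (lookup Q b)))"
    unfolding e top_coeffs_sum using top_coeffs_single_mult[OF d] by simp
  also have "\<dots> = top_coeffs k (\<Sum>a\<in>keys P. single a (lookup P a)) * top_coeffs l (\<Sum>b\<in>keys Q. single b (lookup Q b))"
    by (simp add: top_coeffs_sum sum_product)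
  also have "\<dots> = top_coeffs k P * top_coeffs l Q" using poly_mapping_sum_single[of P] poly_mapping_sum_single[of Q] by simp
  finally show ?thesis using D by simp
qed

lemma coeffs_degree_le_one [simp]: "coeffs_degree_le 0 (1 :: 'a::comm_ring_1 poly mpoly)"
  by (simp add: coeffs_degree_le_def lookup_one when_def)
lemma top_coeffs_one [simp]: "top_coeffs 0 (1 :: 'a::comm_ring_1 poly mpoly) = 1"
  by (rule poly_mapping_eqI) (simp add: lookup_top_coeffs lookup_one when_def)

lemma top_coeffs_prod:
  "(\<And>i. i \<in> I \<Longrightarrow> coeffs_degree_le (k i) (P i)) \<Longrightarrow>
     coeffs_degree_le (sum k I) (prod P I) \<and> top_coeffs (sum k I) (prod P I) = (\<Prod>i\<in>I. top_coeffs (k i) (P i))"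
proof (induction I rule: infinite_finite_induct)
  case (insert x F)
  then show ?case using top_coeffs_mult[of "k x" "P x" "sum k F" "prod P F"] by simp
qed simp_all

lemma top_coeffs_power: "coeffs_degree_le k P \<Longrightarrow> coeffs_degree_le (k * j) (P ^ j) \<and> top_coeffs (k * j) (P ^ j) = top_coeffs k P ^ j"
proof (induction j)
  case 0 then show ?case by simp
next
  case (Suc j)
  then have "coeffs_degree_le (k + k * j) (P * P ^ j) \<and> top_coeffs (k + k * j) (P * P ^ j) = top_coeffs k P * top_coeffs (k * j) (P ^ j)"
    by (intro top_coeffs_mult) auto
  then show ?case using Suc by (simp add: algebra_simps)
qed

lemma top_coeffs_eval_monom:
  assumes "\<And>i. coeffs_degree_le c (\<rho> i)"
  shows "coeffs_degree_le (c * total_degree a) (eval_monom \<rho> a) \<and> top_coeffs (c * total_degree a) (eval_monom \<rho> a) = eval_monom (\<lambda>i. top_coeffs c (\<rho> i)) a"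
proof -
  have "coeffs_degree_le (\<Sum>i\<in>keys a. c * lookup a i) (\<Prod>i\<in>keys a. \<rho> i ^ lookup a i) \<and>
        top_coeffs (\<Sum>i\<in>keys a. c * lookup a i) (\<Prod>i\<in>keys a. \<rho> i ^ lookup a i) = (\<Prod>i\<in>keys a. top_coeffs (c * lookup a i) (\<rho> i ^ lookup a i))"
    by (rule top_coeffs_prod) (use top_coeffs_power[OF assms] in blast)
  moreover have "(\<Prod>i\<in>keys a. top_coeffs (c * lookup a i) (\<rho> i ^ lookup a i)) = (\<Prod>i\<in>keys a. top_coeffs c (\<rho> i) ^ lookup a i)"
    using top_coeffs_power[OF assms] by simp
  ultimately show ?thesis unfolding eval_monom_def total_degree_def by (simp add: sum_distrib_left)
qed

lemma coeffs_degree_le_mconst: "degree x \<le> k \<Longrightarrow> coeffs_degree_le k (mconst x)" by (simp add: mconst_def coeffs_degree_le_single)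
lemma top_coeffs_mconst: "top_coeffs k (mconst x) = mconst (coeff x k)" by (simp add: mconst_def top_coeffs_single)
lemma coeffs_degree_le_mvar: "coeffs_degree_le 0 (mvar i :: 'a::comm_ring_1 poly mpoly)" by (simp add: mvar_def coeffs_degree_le_single)
lemma top_coeffs_mvar: "top_coeffs 0 (mvar i :: 'a::comm_ring_1 poly mpoly) = mvar i" by (simp add: mvar_def top_coeffs_single)

definition homogeneous_part :: "nat \<Rightarrow> 'a::comm_monoid_add mpoly \<Rightarrow> 'a mpoly" where
  "homogeneous_part d f = (\<Sum>a\<in>{a\<in>keys f. total_degree a = d}. single a (lookup f a))"

lemma lookup_homogeneous_part: "lookup (homogeneous_part d f) a = (if total_degree a = d then lookup f a else 0)"
  unfolding homogeneous_part_def by (simp add: lookup_sum lookup_single when_def sum.delta' in_keys_iff)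

lemma keys_homogeneous_part: "keys (homogeneous_part d f) = {a\<in>keys f. total_degree a = d}"
  by (auto simp: in_keys_iff lookup_homogeneous_part split: if_splits)

lemma vars_less_homogeneous_part: "vars_less k f \<Longrightarrow> vars_less k (homogeneous_part d f)"
  using keys_homogeneous_part[of d f] by (auto simp: vars_less_def)

abbreviation const_poly :: "'a::zero \<Rightarrow> 'a poly" where "const_poly c \<equiv> [:c:]"

lemma semiring_hom_const_poly: "semiring_hom (const_poly :: 'a::comm_ring_1 \<Rightarrow> 'a poly)"
  by (simp add: semiring_hom_def one_pCons)

lemma top_coeffs_msubst_linear:
  fixes f :: "'a::comm_ring_1 mpoly"
  assumes "\<And>a. a \<in> keys f \<Longrightarrow> total_degree a \<le> d" "\<And>i. coeffs_degree_le 1 (\<rho> i)"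
  shows "coeffs_degree_le d (msubst (mconst \<circ> const_poly) \<rho> f) \<and>
         top_coeffs d (msubst (mconst \<circ> const_poly) \<rho> f) = msubst mconst (\<lambda>i. top_coeffs 1 (\<rho> i)) (homogeneous_part d f)"
proof -
  define \<sigma>' where "\<sigma>' = (\<lambda>i. top_coeffs 1 (\<rho> i))"
  have t: "coeffs_degree_le (total_degree a) ((mconst \<circ> const_poly) (lookup f a) * eval_monom \<rho> a) \<and>
      top_coeffs (total_degree a) ((mconst \<circ> const_poly) (lookup f a) * eval_monom \<rho> a) = mconst (lookup f a) * eval_monom \<sigma>' a" for a
    using top_coeffs_mult[of 0 "mconst [:lookup f a:]" "total_degree a" "eval_monom \<rho> a"] top_coeffs_eval_monom[of 1 \<rho> a, OF assms(2)]
    unfolding \<sigma>'_def by (simp add: coeffs_degree_le_mconst top_coeffs_mconst)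
  have D: "coeffs_degree_le d (msubst (mconst \<circ> const_poly) \<rho> f)" unfolding msubst_def
    by (intro coeffs_degree_le_sum) (use t assms(1) coeffs_degree_le_mono in blast)
  have "top_coeffs d (msubst (mconst \<circ> const_poly) \<rho> f) =
      (\<Sum>a\<in>keys f. if total_degree a = d then mconst (lookup f a) * eval_monom \<sigma>' a else 0)"
    unfolding msubst_def top_coeffs_sum
  proof (rule sum.cong[OF refl])
    fix a assume a: "a \<in> keys f"
    show "top_coeffs d ((mconst \<circ> const_poly) (lookup f a) * eval_monom \<rho> a) =
      (if total_degree a = d then mconst (lookup f a) * eval_monom \<sigma>' a else 0)"
      using t[of a] assms(1)[OF a] top_coeffs_beyond[of "total_degree a" _ d] by (cases "total_degree a = d") auto
  qed
  also have "\<dots> = msubst mconst \<sigma>' (homogeneous_part d f)"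
    by (simp add: msubst_def keys_homogeneous_part lookup_homogeneous_part sum.inter_filter)
  finally show ?thesis using D unfolding \<sigma>'_def by simp
qed

lemma top_coeffs_msubst_constant:
  fixes H :: "'a::comm_ring_1 poly mpoly"
  assumes "coeffs_degree_le e H" "\<And>i. coeffs_degree_le 0 (\<rho> i)"
  shows "coeffs_degree_le e (msubst mconst \<rho> H) \<and> top_coeffs e (msubst mconst \<rho> H) = msubst mconst (\<lambda>i. top_coeffs 0 (\<rho> i)) (top_coeffs e H)"
proof -
  have d: "degree (lookup H a) \<le> e" for a using assms(1) by (simp add: coeffs_degree_le_def)
  have t: "coeffs_degree_le e (mconst (lookup H a) * eval_monom \<rho> a) \<and>
      top_coeffs e (mconst (lookup H a) * eval_monom \<rho> a) = mconst (coeff (lookup H a) e) * eval_monom (\<lambda>i. top_coeffs 0 (\<rho> i)) a" for a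
    using top_coeffs_mult[of e "mconst (lookup H a)" 0 "eval_monom \<rho> a"] top_coeffs_eval_monom[of 0 \<rho> a, OF assms(2)] d[of a]
    by (simp add: coeffs_degree_le_mconst top_coeffs_mconst)
  have D: "coeffs_degree_le e (msubst mconst \<rho> H)" unfolding msubst_def
    by (intro coeffs_degree_le_sum) (use t in blast)
  have "top_coeffs e (msubst mconst \<rho> H) = (\<Sum>a\<in>keys H. mconst (lookup (top_coeffs e H) a) * eval_monom (\<lambda>i. top_coeffs 0 (\<rho> i)) a)"
    unfolding msubst_def top_coeffs_sum using t by (simp add: lookup_top_coeffs)
  also have "\<dots> = msubst mconst (\<lambda>i. top_coeffs 0 (\<rho> i)) (top_coeffs e H)"
    by (rule msubst_superset[symmetric]) (simp_all add: keys_top_coeffs)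
  finally show ?thesis using D by simp
qed

section \<open>Univariate polynomials\<close>

lemma sum_order_le_degree_on:
  fixes q :: "'a::idom poly"
  assumes q: "q \<noteq> 0" and "finite T"
  shows "(\<Sum>c\<in>T. order c q) \<le> degree q"
proof -
  have "(\<Sum>c\<in>T. order c q) = (\<Sum>c\<in>T \<inter> {x. poly q x = 0}. order c q)"
    using assms(2) by (intro sum.mono_neutral_right) (auto simp: order_root)
  also have "\<dots> \<le> (\<Sum>c | poly q c = 0. order c q)"
    by (intro sum_mono2 poly_roots_finite[OF q]) auto
  also have "\<dots> \<le> degree q" by (rule sum_order_le_degree[OF q])
  finally show ?thesis .
qed

lemma card_roots_mult_le_degree:
  fixes q :: "'a::idom poly"
  assumes "q \<noteq> 0" "finite T" "\<And>c. c \<in> T \<Longrightarrow> [:-c, 1:] ^ k dvd q"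
  shows "card T * k \<le> degree q"
proof -
  have "k \<le> order c q" if "c \<in> T" for c using assms(3)[OF that] assms(1) order_divides by blast
  then have "(\<Sum>c\<in>T. k) \<le> (\<Sum>c\<in>T. order c q)" by (rule sum_mono)
  then show ?thesis using sum_order_le_degree_on[OF assms(1,2)] by simp
qed

lemma coeff_pcompose_order_nonzero:
  fixes q :: "'a::idom poly"
  assumes "q \<noteq> 0"
  shows "coeff (pcompose q [:a, 1:]) (order a q) \<noteq> 0"
proof -
  obtain r where r: "q = [:-a, 1:] ^ order a q * r" "\<not> [:-a, 1:] dvd r"
    using order_decomp[OF assms] by blast
  have pr: "poly r a \<noteq> 0" using r(2) poly_eq_0_iff_dvd by blast
  have b: "pcompose [:-a, 1:] [:a, 1:] = [:0, 1:]"
    by (simp only: pcompose_pCons pcompose_const) (simp add: one_pCons)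
  have pw0: "pcompose (p ^ k) s = (pcompose p s) ^ k" for p s :: "'a poly" and k
    by (induction k) (simp_all add: pcompose_mult pcompose_1)
  have pw: "pcompose ([:-a, 1:] ^ k) [:a, 1:] = [:0, 1:] ^ k" for k
    by (simp add: pw0 b)
  have "pcompose q [:a, 1:] = [:0, 1:] ^ order a q * pcompose r [:a, 1:]"
    by (subst r(1)) (simp add: pcompose_mult pw)
  also have "\<dots> = monom 1 (order a q) * pcompose r [:a, 1:]"
    by (simp add: monom_altdef)
  finally have "coeff (pcompose q [:a, 1:]) (order a q) = coeff (pcompose r [:a, 1:]) 0"
    by (simp add: coeff_monom_mult)
  also have "\<dots> = poly r a" by (simp add: poly_0_coeff_0[symmetric] poly_pcompose)
  finally show ?thesis using pr by simp
qed

lemma map_poly_semiring_hom_add: "semiring_hom \<phi> \<Longrightarrow> map_poly \<phi> (p + q) = map_poly \<phi> p + map_poly \<phi> q"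
  by (intro poly_eqI) (simp add: coeff_map_poly semiring_hom_def)

lemma map_poly_semiring_hom_mult:
  assumes "semiring_hom \<phi>" shows "map_poly \<phi> (p * q) = map_poly \<phi> p * map_poly \<phi> q"
proof (intro poly_eqI)
  fix n
  have z: "\<phi> 0 = 0" and m: "\<And>x y. \<phi> (x*y) = \<phi> x * \<phi> y" using assms by (auto simp: semiring_hom_def)
  show "coeff (map_poly \<phi> (p * q)) n = coeff (map_poly \<phi> p * map_poly \<phi> q) n"
    by (simp add: coeff_map_poly z coeff_mult semiring_hom_sum[OF assms] m)
qed

definition eval_poly :: "('a::comm_ring_1 \<Rightarrow> 'b::comm_ring_1) \<Rightarrow> 'b \<Rightarrow> 'a poly \<Rightarrow> 'b" where
  "eval_poly \<phi> X p = poly (map_poly \<phi> p) X"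

lemma semiring_hom_eval_poly: "semiring_hom \<phi> \<Longrightarrow> semiring_hom (eval_poly \<phi> X)"
  unfolding semiring_hom_def eval_poly_def
  using map_poly_semiring_hom_add[of \<phi>] map_poly_semiring_hom_mult[of \<phi>] by (auto simp: semiring_hom_def)

lemma eval_poly_const: assumes "semiring_hom \<phi>" shows "eval_poly \<phi> X [:c:] = \<phi> c"
proof -
  have z: "\<phi> 0 = 0" using assms by (simp add: semiring_hom_def)
  show ?thesis by (simp add: eval_poly_def z map_poly_pCons)
qed

lemma eval_poly_X: assumes "semiring_hom \<phi>" shows "eval_poly \<phi> X [:c, 1:] = \<phi> c + X"
proof -
  have z: "\<phi> 0 = 0" "\<phi> 1 = 1" using assms by (auto simp: semiring_hom_def)
  show ?thesis by (simp add: eval_poly_def z map_poly_pCons)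
qed

lemma mconst_nonzero: "x \<noteq> 0 \<Longrightarrow> mconst x \<noteq> 0"
  using mconst_inject[of x 0] by simp

lemma semiring_hom_pcompose: "semiring_hom (\<lambda>p. pcompose p s)"
  by (simp add: semiring_hom_def pcompose_add pcompose_mult pcompose_1)

lemma lookup_eval_poly_mvar:
  fixes p :: "'a::comm_ring_1 poly"
  assumes "keys g \<subseteq> {..<r}" "keys g' \<subseteq> {..<r}"
  shows "lookup (eval_poly mconst (mvar r) p * single g 1) (g' + single r k) = (if g = g' then coeff p k else 0)"
proof -
  have "eval_poly mconst (mvar r) p = (\<Sum>j\<le>degree p. single (single r j) (coeff p j))"
    unfolding eval_poly_def poly_altdef
    by (simp add: degree_map_poly[OF mconst_nonzero] coeff_map_poly mvar_power mconst_mult[symmetric, unfolded mconst_def] mconst_def mult_single)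
  then have e: "eval_poly mconst (mvar r) p * single g 1 = (\<Sum>j\<le>degree p. single (single r j + g) (coeff p j))"
    by (simp add: sum_distrib_right mult_single)
  have iff: "single r j + g = g' + single r k \<longleftrightarrow> j = k \<and> g = g'" for j
  proof
    assume h: "single r j + g = g' + single r k"
    have "lookup g r = 0" "lookup g' r = 0" using assms by (auto simp: in_keys_iff)
    then have "j = k" using arg_cong[OF h, of "\<lambda>x. lookup x r"] by (simp add: lookup_add)
    then show "j = k \<and> g = g'" using h by (simp add: add.commute)
  qed (simp add: add.commute)
  have "lookup (eval_poly mconst (mvar r) p * single g 1) (g' + single r k) =
      (\<Sum>j\<le>degree p. if j = k \<and> g = g' then coeff p j else 0)"
    unfolding e lookup_sum by (intro sum.cong refl) (simp add: lookup_single when_def iff)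
  also have "\<dots> = (if g = g' then coeff p k else 0)"
    by (cases "g = g'") (auto simp: coeff_eq_0)
  finally show ?thesis .
qed

section \<open>Vanishing orders on a grid\<close>

definition grid_vectors :: "nat \<Rightarrow> (nat \<Rightarrow> 'a set) \<Rightarrow> (nat \<Rightarrow> 'a::zero) set" where
  "grid_vectors r A = {a. (\<forall>i<r. a i \<in> A i) \<and> (\<forall>i\<ge>r. a i = 0)}"

lemma grid_vectors_0: "grid_vectors 0 A = {\<lambda>i. 0}" by (auto simp: grid_vectors_def)

lemma grid_vectors_Suc: "grid_vectors (Suc r) A = (\<lambda>(a', x). a'(r := x)) ` (grid_vectors r A \<times> A r)"
proof
  show "grid_vectors (Suc r) A \<subseteq> (\<lambda>(a', x). a'(r := x)) ` (grid_vectors r A \<times> A r)"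
  proof
    fix a assume a: "a \<in> grid_vectors (Suc r) A"
    then have "a(r := 0) \<in> grid_vectors r A" "a r \<in> A r" by (auto simp: grid_vectors_def)
    then show "a \<in> (\<lambda>(a', x). a'(r := x)) ` (grid_vectors r A \<times> A r)"
      by (auto intro!: image_eqI[where x="(a(r:=0), a r)"])
  qed
qed (auto simp: grid_vectors_def)

lemma grid_vectors_inj: "inj_on (\<lambda>(a', x). a'(r := x)) (grid_vectors r A \<times> A r)"
proof (rule inj_onI, clarify)
  fix a x b y assume h: "a \<in> grid_vectors r A" "x \<in> A r" "b \<in> grid_vectors r A" "y \<in> A r" "a(r := x) = b(r := y)"
  have "x = y" using fun_cong[OF h(5), of r] by simp
  moreover have "a = b"
  proof
    fix i show "a i = b i"
      using fun_cong[OF h(5), of i] h(1,3) by (cases "i = r") (auto simp: grid_vectors_def)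
  qed
  ultimately show "a = b \<and> x = y" by simp
qed

lemma grid_vectors_card: "\<forall>i<r. finite (A i) \<and> card (A i) = N \<Longrightarrow> finite (grid_vectors r A) \<and> card (grid_vectors r A) = N ^ r"
proof (induction r)
  case 0 then show ?case by (simp add: grid_vectors_0)
next
  case (Suc r)
  then have f: "finite (grid_vectors r A)" "card (grid_vectors r A) = N ^ r" "finite (A r)" "card (A r) = N" by auto
  have "card (grid_vectors (Suc r) A) = card (grid_vectors r A \<times> A r)"
    unfolding grid_vectors_Suc by (rule card_image[OF grid_vectors_inj])
  then show ?case using f by (simp add: grid_vectors_Suc card_cartesian_product)
qed

text \<open>The multiplicity of \<open>h\<close> at \<open>a\<close>; for \<open>h = 0\<close> it is the junk value \<open>Min {}\<close>.\<close>

definition vanishing_order :: "'a::comm_ring_1 mpoly \<Rightarrow> (nat \<Rightarrow> 'a) \<Rightarrow> nat" where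
  "vanishing_order h a = Min (total_degree ` keys (translate a h))"

lemma vanishing_order_le: "g \<in> keys (translate a h) \<Longrightarrow> vanishing_order h a \<le> total_degree g"
  unfolding vanishing_order_def by (rule Min_le) auto

lemma vanishing_order_ge: "translate a h \<noteq> 0 \<Longrightarrow> (\<And>g. g \<in> keys (translate a h) \<Longrightarrow> m \<le> total_degree g) \<Longrightarrow> m \<le> vanishing_order h a"
  unfolding vanishing_order_def by (subst Min_ge_iff) auto

lemma vanishing_order_attained: "translate a h \<noteq> 0 \<Longrightarrow> \<exists>g\<in>keys (translate a h). total_degree g = vanishing_order h a"
  unfolding vanishing_order_def by (metis (mono_tags, lifting) Min_in empty_iff finite_imageI finite_keys image_iff image_is_empty keys_eq_empty)

text \<open>\<open>last_var_poly r h\<close> regards \<open>h \<in> K[x\<^sub>0, \<dots>, x\<^sub>r]\<close> as a polynomial in \<open>x\<^sub>0, \<dots>, x\<^sub>r\<^sub>-\<^sub>1\<close>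
  whose coefficients are univariate polynomials in \<open>x\<^sub>r\<close>.\<close>

definition last_var_poly :: "nat \<Rightarrow> 'a::comm_ring_1 mpoly \<Rightarrow> 'a poly mpoly" where
  "last_var_poly r h = msubst (mconst \<circ> const_poly) (\<lambda>i. if i \<in> {..<r} then mvar i else mconst [:0, 1:]) h"

lemma last_var_poly_eq_sum:
  fixes h :: "'a::comm_ring_1 mpoly"
  assumes "vars_less (Suc r) h"
  shows "last_var_poly r h = (\<Sum>a\<in>keys h. single (monom_restrict a {..<r}) (monom (lookup h a) (lookup a r)))"
  unfolding last_var_poly_def msubst_def
proof (rule sum.cong[OF refl])
  fix a assume a: "a \<in> keys h"
  have ka: "keys a \<subseteq> {..<Suc r}" using assms a by (simp add: vars_less_def)
  have p: "(\<Prod>i\<in>keys a - {..<r}. [:0, 1:] ^ lookup a i) = ([:0, 1:] :: 'a poly) ^ lookup a r"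
  proof (cases "r \<in> keys a")
    case True
    then have "keys a - {..<r} = {r}" using ka by auto
    then show ?thesis by simp
  next
    case False
    then have e: "keys a - {..<r} = {}" using ka by (auto simp: less_Suc_eq)
    have "lookup a r = 0" using False by (simp add: in_keys_iff)
    then show ?thesis unfolding e by simp
  qed
  have "eval_monom (\<lambda>i. if i \<in> {..<r} then mvar i else mconst [:0, 1:]) a
      = single (monom_restrict a {..<r}) (([:0, 1:] :: 'a poly) ^ lookup a r)"
    by (subst eval_monom_mvar_mconst[where g="\<lambda>i. [:0, 1:]" and I="{..<r}"]) (simp_all only: p)
  then show "(mconst \<circ> const_poly) (lookup h a) * eval_monom (\<lambda>i. if i \<in> {..<r} then mvar i else mconst [:0, 1:]) a =
      single (monom_restrict a {..<r}) (monom (lookup h a) (lookup a r))"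
    by (simp add: mconst_def mult_single monom_altdef)
qed

lemma coeff_last_var_poly:
  fixes h :: "'a::comm_ring_1 mpoly"
  assumes V: "vars_less (Suc r) h" and g: "keys g \<subseteq> {..<r}"
  shows "coeff (lookup (last_var_poly r h) g) j = lookup h (g + single r j)"
proof -
  have iff: "monom_restrict a {..<r} = g \<and> lookup a r = j \<longleftrightarrow> a = g + single r j" if "a \<in> keys h" for a
  proof -
    have ka: "keys a \<subseteq> {..<Suc r}" using V that by (simp add: vars_less_def)
    show ?thesis using monom_split_last[OF ka] monom_restrict_last[OF g, of j] by metis
  qed
  have "coeff (lookup (last_var_poly r h) g) j =
      (\<Sum>a\<in>keys h. if monom_restrict a {..<r} = g \<and> lookup a r = j then lookup h a else 0)"
    unfolding last_var_poly_eq_sum[OF V] lookup_sum coeff_sum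
    by (rule sum.cong[OF refl]) (auto simp: lookup_single when_def coeff_monom)
  also have "\<dots> = (\<Sum>a\<in>keys h. if a = g + single r j then lookup h a else 0)"
    by (rule sum.cong[OF refl]) (simp add: iff)
  also have "\<dots> = lookup h (g + single r j)" by (simp add: sum.delta' in_keys_iff)
  finally show ?thesis .
qed

lemma vars_less_last_var_poly:
  fixes h :: "'a::comm_ring_1 mpoly"
  assumes "vars_less (Suc r) h"
  shows "vars_less r (last_var_poly r h)"
proof -
  have "lookup (last_var_poly r h) g = 0" if "\<not> keys g \<subseteq> {..<r}" for g
  proof -
    have "monom_restrict a {..<r} \<noteq> g" for a using that keys_monom_restrict[of a "{..<r}"] by auto
    then show ?thesis by (simp add: last_var_poly_eq_sum[OF assms] lookup_sum lookup_single when_def)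
  qed
  then show ?thesis unfolding vars_less_def by (auto simp: in_keys_iff)
qed

lemma last_var_poly_nonzero:
  fixes h :: "'a::comm_ring_1 mpoly"
  assumes V: "vars_less (Suc r) h" and "h \<noteq> 0"
  shows "last_var_poly r h \<noteq> 0"
proof -
  obtain a0 where a0: "a0 \<in> keys h" using assms(2) keys_eq_empty by blast
  have "keys a0 \<subseteq> {..<Suc r}" using V a0 by (simp add: vars_less_def)
  then have "coeff (lookup (last_var_poly r h) (monom_restrict a0 {..<r})) (lookup a0 r) = lookup h a0"
    using coeff_last_var_poly[OF V, of "monom_restrict a0 {..<r}" "lookup a0 r"] monom_split_last
    by (simp add: keys_monom_restrict)
  then show ?thesis using a0 by (auto simp: in_keys_iff)
qed

lemma total_degree_top_coeffs_last_var_poly: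
  fixes h :: "'a::comm_ring_1 mpoly"
  assumes V: "vars_less (Suc r) h" and d: "\<forall>a\<in>keys h. total_degree a \<le> d"
    and b: "b \<in> keys (top_coeffs e (last_var_poly r h))"
  shows "total_degree b + e \<le> d"
proof -
  have "keys b \<subseteq> {..<r}"
    using b keys_top_coeffs vars_less_last_var_poly[OF V] by (fastforce simp: vars_less_def)
  then have "lookup h (b + single r e) \<noteq> 0"
    using b coeff_last_var_poly[OF V] by (simp add: lookup_top_coeffs in_keys_iff)
  then show ?thesis using d by (metis in_keys_iff total_degree_add total_degree_single)
qed

lemma last_var_poly_top_degree:
  fixes h :: "'a::comm_ring_1 mpoly"
  assumes V: "vars_less (Suc r) h" and h0: "h \<noteq> 0" and dh: "\<forall>a\<in>keys h. total_degree a \<le> d"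
  obtains e where "coeffs_degree_le e (last_var_poly r h)" "top_coeffs e (last_var_poly r h) \<noteq> 0" "e \<le> d"
proof -
  define H where "H = last_var_poly r h"
  have "keys H \<noteq> {}" using last_var_poly_nonzero[OF V h0] by (simp add: H_def)
  define e where "e = Max ((\<lambda>g. degree (lookup H g)) ` keys H)"
  have "e \<in> (\<lambda>g. degree (lookup H g)) ` keys H" unfolding e_def by (rule Max_in) (use \<open>keys H \<noteq> {}\<close> in auto)
  then obtain g0 where g0: "g0 \<in> keys H" "degree (lookup H g0) = e" by auto
  have DH: "coeffs_degree_le e H" unfolding coeffs_degree_le_def
  proof
    fix g show "degree (lookup H g) \<le> e"
      by (cases "g \<in> keys H") (auto simp: e_def in_keys_iff intro: Max_ge)
  qed
  have "lookup (top_coeffs e H) g0 \<noteq> 0"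
    using g0 unfolding lookup_top_coeffs by (metis in_keys_iff leading_coeff_0_iff)
  moreover have "e \<le> d" using total_degree_top_coeffs_last_var_poly[OF V dh, of g0 e] calculation
    by (simp add: H_def in_keys_iff)
  ultimately show ?thesis using that DH unfolding H_def by fastforce
qed

text \<open>Translating \<open>h\<close> by \<open>a'(r := x)\<close> amounts to translating the coefficients of
  \<open>last_var_poly r h\<close> by \<open>a'\<close> and then the univariate polynomials by \<open>x\<close>.\<close>

lemma msubst_translate_last_var_poly:
  fixes h :: "'a::comm_ring_1 mpoly" and x :: 'a
  assumes V: "vars_less (Suc r) h"
  defines "T \<equiv> (\<lambda>p. eval_poly mconst (mvar r) (pcompose p [:x, 1:]) :: 'a mpoly)"
  shows "msubst T mvar (msubst mconst (\<lambda>i. mconst [:a' i:] + mvar i) (last_var_poly r h)) = translate (a'(r := x)) h"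
proof -
  have hT: "semiring_hom T"
  proof -
    have "semiring_hom (eval_poly mconst (mvar r) \<circ> (\<lambda>p. pcompose p [:x, 1:]))"
      by (rule semiring_hom_comp[OF semiring_hom_pcompose semiring_hom_eval_poly[OF semiring_hom_mconst]])
    then show ?thesis by (simp add: T_def o_def)
  qed
  have Tc: "T [:c:] = mconst c" for c unfolding T_def by (simp add: eval_poly_const[OF semiring_hom_mconst])
  have "pcompose [:0, 1:] [:x, 1:] = [:x, 1:]" by (simp add: pcompose_pCons)
  then have TX: "T [:0, 1:] = mconst x + mvar r" unfolding T_def by (simp add: eval_poly_X[OF semiring_hom_mconst])
  let ?\<rho> = "\<lambda>i. mconst [:a' i:] + mvar i :: 'a poly mpoly"
  have "msubst T mvar (msubst mconst ?\<rho> (last_var_poly r h)) =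
      msubst T (\<lambda>i. mconst (a' i) + mvar i) (last_var_poly r h)"
    by (simp add: msubst_comp[OF semiring_hom_mconst semiring_hom_msubst[OF hT]] o_def
        msubst_mconst[OF hT] msubst_add[OF hT] msubst_mvar[OF hT] Tc)
  also have "\<dots> = msubst (msubst T (\<lambda>i. mconst (a' i) + mvar i) \<circ> (mconst \<circ> const_poly))
      (msubst T (\<lambda>i. mconst (a' i) + mvar i) \<circ> (\<lambda>i. if i \<in> {..<r} then mvar i else mconst [:0, 1:])) h"
    unfolding last_var_poly_def
    by (rule msubst_comp[OF semiring_hom_comp[OF semiring_hom_const_poly semiring_hom_mconst] semiring_hom_msubst[OF hT]])
  also have "msubst T (\<lambda>i. mconst (a' i) + mvar i) \<circ> (mconst \<circ> const_poly) = mconst"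
    by (rule ext) (simp add: msubst_mconst[OF hT] Tc)
  also have "msubst T (\<lambda>i. mconst (a' i) + mvar i) \<circ> (\<lambda>i. if i \<in> {..<r} then mvar i else mconst [:0, 1:]) =
      (\<lambda>i. if i < r then mconst (a' i) + mvar i else mconst x + mvar r)"
    by (rule ext) (simp add: msubst_mconst[OF hT] msubst_mvar[OF hT] TX)
  also have "msubst mconst (\<lambda>i. if i < r then mconst (a' i) + mvar i else mconst x + mvar r) h =
      translate (a'(r := x)) h"
    unfolding translate_def
  proof (rule msubst_cong)
    fix b i assume "b \<in> keys h" "i \<in> keys b"
    then have "i < Suc r" using V by (auto simp: vars_less_def)
    then show "(if i < r then mconst (a' i) + mvar i else mconst x + mvar r) = mconst ((a'(r := x)) i) + mvar i"
      by (cases "i = r") auto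
  qed
  finally show ?thesis .
qed

lemma lookup_translate_last_var_poly:
  fixes h :: "'a::comm_ring_1 mpoly"
  assumes V: "vars_less (Suc r) h" and \<gamma>: "keys \<gamma> \<subseteq> {..<r}"
  shows "lookup (translate (a'(r := x)) h) (\<gamma> + single r k) =
    coeff (pcompose (lookup (msubst mconst (\<lambda>i. mconst [:a' i:] + mvar i) (last_var_poly r h)) \<gamma>) [:x, 1:]) k"
proof -
  define Q where "Q = msubst mconst (\<lambda>i. mconst [:a' i:] + mvar i) (last_var_poly r h)"
  define T where "T = (\<lambda>p. eval_poly mconst (mvar r) (pcompose p [:x, 1:]) :: 'a mpoly)"
  have "vars_less r (msubst (mconst \<circ> id) (\<lambda>i. mconst [:a' i:] + mvar i) (last_var_poly r h))"
    by (rule vars_less_msubst[OF semiring_hom_id vars_less_last_var_poly[OF V]]) (simp add: vars_less_add vars_less_mvar)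
  then have VQ: "vars_less r Q" by (simp add: Q_def)
  have "translate (a'(r := x)) h = msubst T mvar Q"
    using msubst_translate_last_var_poly[OF V, of x a'] by (simp add: Q_def T_def)
  then have "lookup (translate (a'(r := x)) h) (\<gamma> + single r k) =
      (\<Sum>g\<in>keys Q. lookup (T (lookup Q g) * single g 1) (\<gamma> + single r k))"
    by (simp add: msubst_def eval_monom_mvar lookup_sum)
  also have "\<dots> = (\<Sum>g\<in>keys Q. if g = \<gamma> then coeff (pcompose (lookup Q g) [:x, 1:]) k else 0)"
  proof (rule sum.cong[OF refl])
    fix g assume "g \<in> keys Q"
    then have "keys g \<subseteq> {..<r}" using VQ by (simp add: vars_less_def)
    then show "lookup (T (lookup Q g) * single g 1) (\<gamma> + single r k) =
        (if g = \<gamma> then coeff (pcompose (lookup Q g) [:x, 1:]) k else 0)"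
      unfolding T_def by (rule lookup_eval_poly_mvar[OF _ \<gamma>])
  qed
  also have "\<dots> = coeff (pcompose (lookup Q \<gamma>) [:x, 1:]) k" by (simp add: sum.delta' in_keys_iff)
  finally show ?thesis unfolding Q_def .
qed

lemma vanishing_order_last_var_le:
  fixes h :: "'a::field mpoly"
  assumes V: "vars_less (Suc r) h" and De: "coeffs_degree_le e (last_var_poly r h)"
    and he0: "top_coeffs e (last_var_poly r h) \<noteq> 0"
  obtains q where "q \<noteq> 0" "degree q \<le> e"
    "\<And>x. vanishing_order h (a'(r := x)) \<le> vanishing_order (top_coeffs e (last_var_poly r h)) a' + order x q"
proof -
  define he where "he = top_coeffs e (last_var_poly r h)"
  define Q where "Q = msubst mconst (\<lambda>i. mconst [:a' i:] + mvar i) (last_var_poly r h)"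
  have "coeffs_degree_le e Q \<and> top_coeffs e Q = msubst mconst (\<lambda>i. top_coeffs 0 (mconst [:a' i:] + mvar i)) he"
    unfolding Q_def he_def by (rule top_coeffs_msubst_constant[OF De])
      (intro coeffs_degree_le_add coeffs_degree_le_mconst coeffs_degree_le_mvar, simp)
  moreover have "(\<lambda>i. top_coeffs 0 (mconst [:a' i:] + mvar i)) = (\<lambda>i. mconst (a' i) + mvar i :: 'a mpoly)"
    by (simp add: top_coeffs_add top_coeffs_mconst top_coeffs_mvar)
  ultimately have DQ: "coeffs_degree_le e Q" and TQ: "top_coeffs e Q = translate a' he"
    unfolding translate_def by auto
  have "translate a' he \<noteq> 0" using translate_eq_0D[of a' he] he0 by (auto simp: he_def)
  then obtain \<gamma> where \<gamma>: "\<gamma> \<in> keys (translate a' he)" "total_degree \<gamma> = vanishing_order he a'"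
    using vanishing_order_attained by blast
  define q where "q = lookup Q \<gamma>"
  have "coeff q e \<noteq> 0" using \<gamma>(1) TQ unfolding q_def by (metis in_keys_iff lookup_top_coeffs)
  then have q0: "q \<noteq> 0" by auto
  have "degree q \<le> e" using DQ unfolding q_def coeffs_degree_le_def by simp
  have "vars_less r he" using vars_less_last_var_poly[OF V] keys_top_coeffs[of e "last_var_poly r h"]
    unfolding he_def vars_less_def by blast
  then have k\<gamma>: "keys \<gamma> \<subseteq> {..<r}" using vars_less_translate[of r he a'] \<gamma>(1) by (simp add: vars_less_def)
  have bound: "vanishing_order h (a'(r := x)) \<le> vanishing_order he a' + order x q" for x
  proof -
    have "lookup (translate (a'(r := x)) h) (\<gamma> + single r (order x q)) \<noteq> 0"
      using lookup_translate_last_var_poly[OF V k\<gamma>] coeff_pcompose_order_nonzero[OF q0]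
      by (simp add: q_def Q_def)
    then have "vanishing_order h (a'(r := x)) \<le> total_degree (\<gamma> + single r (order x q))"
      by (intro vanishing_order_le) (simp add: in_keys_iff)
    then show ?thesis using \<gamma>(2) by simp
  qed
  show ?thesis using that[OF q0 \<open>degree q \<le> e\<close>] bound unfolding he_def by blast
qed

lemma sum_vanishing_order_grid_le:
  fixes h :: "'a::field mpoly"
  shows "\<forall>i<r. finite (A i) \<and> card (A i) = N \<Longrightarrow> h \<noteq> 0 \<Longrightarrow> vars_less r h \<Longrightarrow>
    (\<forall>a\<in>keys h. total_degree a \<le> d) \<Longrightarrow> N * (\<Sum>a\<in>grid_vectors r A. vanishing_order h a) \<le> d * N ^ r"
proof (induction r arbitrary: h d)
  case 0
  have "keys h \<subseteq> {0}" using "0.prems"(3) by (auto simp: vars_less_def)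
  then have "keys h = {0}" using "0.prems"(2) subset_singletonD by fastforce
  then have "vanishing_order h (\<lambda>i. 0) = 0" by (simp add: vanishing_order_def translate_0)
  then show ?case by (simp add: grid_vectors_0)
next
  case (Suc r)
  note A = Suc.prems(1) and Vh = Suc.prems(3) and dh = Suc.prems(4)
  define H where "H = last_var_poly r h"
  obtain e where DH: "coeffs_degree_le e H" and he0: "top_coeffs e H \<noteq> 0" and ed: "e \<le> d"
    using last_var_poly_top_degree[OF Vh Suc.prems(2) dh] unfolding H_def by blast
  define he where "he = top_coeffs e H"
  note he0 = he0[folded he_def]
  have IH: "N * (\<Sum>a\<in>grid_vectors r A. vanishing_order he a) \<le> (d - e) * N ^ r"
  proof (rule Suc.IH)
    show "vars_less r he" using vars_less_last_var_poly[OF Vh] keys_top_coeffs[of e H]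
      unfolding he_def H_def vars_less_def by blast
    show "\<forall>a\<in>keys he. total_degree a \<le> d - e"
    proof
      fix a assume "a \<in> keys he"
      then have "total_degree a + e \<le> d"
        using total_degree_top_coeffs_last_var_poly[OF Vh dh] by (simp add: he_def H_def)
      then show "total_degree a \<le> d - e" by simp
    qed
  qed (use A he0 in auto)
  have Ar: "finite (A r)" "card (A r) = N" using A by auto
  have fibre: "(\<Sum>x\<in>A r. vanishing_order h (a'(r := x))) \<le> N * vanishing_order he a' + e" for a'
  proof -
    obtain q where q: "q \<noteq> 0" "degree q \<le> e"
      "\<And>x. vanishing_order h (a'(r := x)) \<le> vanishing_order he a' + order x q"
      by (rule vanishing_order_last_var_le[OF Vh DH[unfolded H_def] he0[unfolded he_def H_def], of a'])
        (simp_all add: he_def H_def)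
    have "(\<Sum>x\<in>A r. vanishing_order h (a'(r := x))) \<le> (\<Sum>x\<in>A r. vanishing_order he a' + order x q)"
      by (rule sum_mono) (rule q(3))
    also have "\<dots> = N * vanishing_order he a' + (\<Sum>x\<in>A r. order x q)" using Ar by (simp add: sum.distrib)
    also have "(\<Sum>x\<in>A r. order x q) \<le> e" using sum_order_le_degree_on[OF q(1) Ar(1)] q(2) by simp
    finally show ?thesis by simp
  qed
  have "(\<Sum>a\<in>grid_vectors (Suc r) A. vanishing_order h a) = (\<Sum>a'\<in>grid_vectors r A. \<Sum>x\<in>A r. vanishing_order h (a'(r := x)))"
    unfolding grid_vectors_Suc
    by (subst sum.reindex[OF grid_vectors_inj]) (simp add: sum.cartesian_product split_def)
  also have "\<dots> \<le> (\<Sum>a'\<in>grid_vectors r A. N * vanishing_order he a' + e)"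
    by (rule sum_mono) (rule fibre)
  also have "\<dots> = N * (\<Sum>a'\<in>grid_vectors r A. vanishing_order he a') + e * N ^ r"
    using grid_vectors_card[of r A N] A by (auto simp: sum.distrib sum_distrib_left)
  finally have S: "(\<Sum>a\<in>grid_vectors (Suc r) A. vanishing_order h a) \<le>
      N * (\<Sum>a'\<in>grid_vectors r A. vanishing_order he a') + e * N ^ r" .
  have "N * (\<Sum>a\<in>grid_vectors (Suc r) A. vanishing_order h a) \<le>
      N * (N * (\<Sum>a'\<in>grid_vectors r A. vanishing_order he a')) + N * (e * N ^ r)"
    using mult_le_mono2[OF S, of N] by (simp add: algebra_simps)
  also have "\<dots> \<le> N * ((d - e) * N ^ r) + N * (e * N ^ r)"
    using mult_le_mono2[OF IH, of N] by simp
  also have "\<dots> = d * N ^ Suc r" using ed by (simp add: algebra_simps)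
  finally show ?case .
qed

section \<open>The top homogeneous part along a direction\<close>

lemma pCons_line_decomp: "[:u + c * v:] + [:- c, 1:] * [:v:] = [:u, v::'a::comm_ring_1:]"
  by (simp add: algebra_simps)

text \<open>\<open>line_pencil r u v f\<close> is \<open>f(u + t (v + y))\<close> with \<open>y\<^sub>r = 0\<close>, as a polynomial in
  \<open>y\<^sub>0, \<dots>, y\<^sub>r\<^sub>-\<^sub>1\<close> whose coefficients are univariate polynomials in \<open>t\<close>.\<close>

definition line_pencil :: "nat \<Rightarrow> (nat \<Rightarrow> 'a) \<Rightarrow> (nat \<Rightarrow> 'a) \<Rightarrow> 'a::comm_ring_1 mpoly \<Rightarrow> 'a poly mpoly" where
  "line_pencil r u v f = msubst (mconst \<circ> const_poly)
     (\<lambda>i. mconst [:u i, v i:] + (if i < r then mconst [:0, 1:] * mvar i else 0)) f"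

text \<open>If \<open>f\<close> vanishes to order \<open>m\<close> at \<open>u + c v\<close>, then the coefficient of a monomial \<open>g\<close>
  in \<open>line_pencil r u v f\<close> is divisible by \<open>(t - c)\<^bsup>m - deg g\<^esup>\<close>: rewrite \<open>u + t (v + y)\<close> as
  \<open>(u + c v) + (t - c) v + t y\<close>.\<close>

lemma pow_dvd_lookup_line_pencil:
  fixes f :: "'a::field mpoly"
  assumes vanish: "\<And>b. total_degree b < m \<Longrightarrow> lookup (translate (\<lambda>i. u i + c * v i) f) b = 0"
  shows "[:-c, 1:] ^ (m - total_degree g) dvd lookup (line_pencil r u v f) g"
proof -
  define \<tau> where "\<tau> = [:-c, 1:]"
  define p where "p = (\<lambda>i. u i + c * v i)"
  define \<rho> where "\<rho> = (\<lambda>i. mconst (\<tau> * [:v i:]) + (if i < r then mconst [:0, 1:] * mvar i else 0) :: 'a poly mpoly)"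
  have hc: "semiring_hom (mconst \<circ> const_poly :: 'a \<Rightarrow> 'a poly mpoly)"
    by (rule semiring_hom_comp[OF semiring_hom_const_poly semiring_hom_mconst])
  have "msubst (mconst \<circ> const_poly) \<rho> (translate p f) =
      msubst (msubst (mconst \<circ> const_poly) \<rho> \<circ> mconst) (msubst (mconst \<circ> const_poly) \<rho> \<circ> (\<lambda>i. mconst (p i) + mvar i)) f"
    unfolding translate_def by (rule msubst_comp[OF semiring_hom_mconst semiring_hom_msubst[OF hc]])
  also have "msubst (mconst \<circ> const_poly) \<rho> \<circ> mconst = mconst \<circ> const_poly"
    by (rule ext) (simp add: msubst_mconst[OF hc])
  also have "msubst (mconst \<circ> const_poly) \<rho> \<circ> (\<lambda>i. mconst (p i) + mvar i) =
      (\<lambda>i. mconst [:u i, v i:] + (if i < r then mconst [:0, 1:] * mvar i else 0))"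
  proof (rule ext)
    fix i
    have "mconst [:p i:] + mconst (\<tau> * [:v i:]) = (mconst [:u i, v i:] :: 'a poly mpoly)"
      unfolding mconst_add[symmetric] p_def \<tau>_def by (simp only: pCons_line_decomp)
    then show "(msubst (mconst \<circ> const_poly) \<rho> \<circ> (\<lambda>i. mconst (p i) + mvar i)) i =
        mconst [:u i, v i:] + (if i < r then mconst [:0, 1:] * mvar i else 0)"
      by (simp add: msubst_add[OF hc] msubst_mconst[OF hc] msubst_mvar[OF hc] \<rho>_def add.assoc)
  qed
  finally have FF: "msubst (mconst \<circ> const_poly) \<rho> (translate p f) = line_pencil r u v f"
    unfolding line_pencil_def .
  have "pow_dvd_coeffs \<tau> 1 (\<rho> i)" for i
  proof -
    have a: "pow_dvd_coeffs \<tau> 1 (mconst (\<tau> * [:v i:]))" unfolding mconst_def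
      by (rule pow_dvd_coeffs_single) (simp only: total_degree_zero diff_zero power_one_right dvd_triv_left)
    have "pow_dvd_coeffs \<tau> (0 + 1) (mconst [:0, 1:] * (mvar i :: 'a poly mpoly))"
      by (rule pow_dvd_coeffs_mult) (simp_all add: mvar_def pow_dvd_coeffs_single)
    then show ?thesis unfolding \<rho>_def using a by (auto intro: pow_dvd_coeffs_add)
  qed
  moreover have "m \<le> total_degree b" if "b \<in> keys (translate p f)" for b
    using vanish that unfolding p_def by (auto simp: in_keys_iff not_less[symmetric])
  ultimately have "pow_dvd_coeffs \<tau> m (msubst (mconst \<circ> const_poly) \<rho> (translate p f))"
    by (intro pow_dvd_coeffs_msubst[OF semiring_hom_const_poly]) auto
  then show ?thesis unfolding FF \<tau>_def pow_dvd_coeffs_def by simp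
qed

text \<open>The coefficient of \<open>t\<^sup>d\<close> in \<open>line_pencil\<close> is the degree-\<open>d\<close> part of \<open>f\<close> evaluated
  at \<open>v + y\<close>.\<close>

lemma top_coeffs_line_pencil:
  fixes f :: "'a::comm_ring_1 mpoly"
  assumes Vf: "vars_less (Suc r) f" and dl: "\<And>a. a \<in> keys f \<Longrightarrow> total_degree a \<le> d" and vr: "v r = 1"
  shows "coeffs_degree_le d (line_pencil r u v f)"
    and "top_coeffs d (line_pencil r u v f) =
      msubst mconst (\<lambda>i. if i < r then mconst (v i) + mvar i else 1) (homogeneous_part d f)"
proof -
  define \<sigma> where "\<sigma> = (\<lambda>i. mconst [:u i, v i:] + (if i < r then mconst [:0, 1:] * mvar i else 0) :: 'a poly mpoly)"
  have lin: "coeffs_degree_le (1 + 0) (mconst [:0, 1:] * (mvar i :: 'a poly mpoly)) \<and>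
      top_coeffs (1 + 0) (mconst [:0, 1:] * (mvar i :: 'a poly mpoly)) = mvar i" for i
    using top_coeffs_mult[of 1 "mconst [:0, 1:] :: 'a poly mpoly" 0 "mvar i"]
    by (simp add: coeffs_degree_le_mconst coeffs_degree_le_mvar top_coeffs_mconst top_coeffs_mvar)
  have "coeffs_degree_le 1 (\<sigma> i)" for i
    unfolding \<sigma>_def using lin by (intro coeffs_degree_le_add coeffs_degree_le_mconst) auto
  moreover have "line_pencil r u v f = msubst (mconst \<circ> const_poly) \<sigma> f"
    unfolding line_pencil_def \<sigma>_def ..
  ultimately have DT: "coeffs_degree_le d (line_pencil r u v f) \<and>
      top_coeffs d (line_pencil r u v f) = msubst mconst (\<lambda>i. top_coeffs 1 (\<sigma> i)) (homogeneous_part d f)"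
    using top_coeffs_msubst_linear[where f=f and d=d and \<rho>=\<sigma>, OF dl] by simp
  then show "coeffs_degree_le d (line_pencil r u v f)" by blast
  have T1: "top_coeffs 1 (\<sigma> i) = mconst (v i) + (if i < r then mvar i else 0)" for i
    using lin[of i] by (simp add: \<sigma>_def top_coeffs_add top_coeffs_mconst)
  have Vft: "vars_less (Suc r) (homogeneous_part d f)"
    by (rule vars_less_homogeneous_part[OF Vf])
  show "top_coeffs d (line_pencil r u v f) =
      msubst mconst (\<lambda>i. if i < r then mconst (v i) + mvar i else 1) (homogeneous_part d f)"
    unfolding DT[THEN conjunct2]
  proof (rule msubst_cong)
    fix a i assume "a \<in> keys (homogeneous_part d f)" "i \<in> keys a"
    then have "i < Suc r" using Vft by (auto simp: vars_less_def)
    then show "top_coeffs 1 (\<sigma> i) = (if i < r then mconst (v i) + mvar i else 1)"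
      using vr T1[of i] by (cases "i = r") (auto simp: mconst_1)
  qed
qed

text \<open>A coefficient of \<open>line_pencil\<close> has degree \<open>\<le> d\<close> but, by the divisibility above, at
  least \<open>|T| (m - deg g)\<close> roots counted with multiplicity; so the top coefficient vanishes.\<close>

lemma homogeneous_part_along_direction:
  fixes f :: "'a::field mpoly" and u v :: "nat \<Rightarrow> 'a" and T :: "'a set"
  assumes Vf: "vars_less (Suc r) f" and dl: "\<And>a. a \<in> keys f \<Longrightarrow> total_degree a \<le> d"
    and mult: "\<And>c b. c \<in> T \<Longrightarrow> total_degree b < m \<Longrightarrow> lookup (translate (\<lambda>i. u i + c * v i) f) b = 0"
    and Tfin: "finite T" and vr: "v r = 1"
    and big: "d < card T * (m - total_degree g)"
  shows "lookup (msubst mconst (\<lambda>i. if i < r then mconst (v i) + mvar i else 1) (homogeneous_part d f)) g = 0"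
proof -
  note pencil = top_coeffs_line_pencil[where r=r and f=f and d=d and v=v and u=u, OF Vf dl vr]
  have "lookup (line_pencil r u v f) g = 0"
  proof (rule ccontr)
    assume nz: "lookup (line_pencil r u v f) g \<noteq> 0"
    have "card T * (m - total_degree g) \<le> degree (lookup (line_pencil r u v f) g)"
      by (rule card_roots_mult_le_degree[OF nz Tfin pow_dvd_lookup_line_pencil[OF mult]])
    also have "\<dots> \<le> d" using pencil(1) by (simp add: coeffs_degree_le_def)
    finally show False using big by simp
  qed
  then have "lookup (top_coeffs d (line_pencil r u v f)) g = 0" by (simp add: lookup_top_coeffs)
  then show ?thesis using pencil(2) by simp
qed

section \<open>Dehomogenization and the counting bound\<close>

definition dehomogenize :: "nat \<Rightarrow> 'a::comm_ring_1 mpoly \<Rightarrow> 'a mpoly" where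
  "dehomogenize r F = msubst mconst (\<lambda>i. if i \<in> {..<r} then mvar i else mconst 1) F"

lemma dehomogenize_eq_sum:
  fixes F :: "'a::comm_ring_1 mpoly"
  assumes "vars_less (Suc r) F"
  shows "dehomogenize r F = (\<Sum>a\<in>keys F. single (monom_restrict a {..<r}) (lookup F a))"
  unfolding dehomogenize_def msubst_def
proof (rule sum.cong[OF refl])
  fix a assume "a \<in> keys F"
  have "eval_monom (\<lambda>i. if i \<in> {..<r} then mvar i else mconst 1) a = single (monom_restrict a {..<r}) (1 :: 'a)"
    by (subst eval_monom_mvar_mconst[where g="\<lambda>i. 1" and I="{..<r}"]) simp_all
  then show "mconst (lookup F a) * eval_monom (\<lambda>i. if i \<in> {..<r} then mvar i else mconst 1) a
      = single (monom_restrict a {..<r}) (lookup F a)"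
    by (simp add: mconst_def mult_single)
qed

lemma lookup_dehomogenize:
  "vars_less (Suc r) F \<Longrightarrow>
    lookup (dehomogenize r F) b = (\<Sum>a\<in>keys F. if monom_restrict a {..<r} = b then lookup F a else 0)"
  by (simp add: dehomogenize_eq_sum lookup_sum lookup_single when_def)

lemma total_degree_monom_restrict_le:
  "keys a \<subseteq> {..<Suc r} \<Longrightarrow> total_degree (monom_restrict a {..<r}) \<le> total_degree a"
  using monom_split_last[of a r] by (metis le_add1 total_degree_add)

text \<open>On a homogeneous polynomial the last exponent is determined by the others, so
  dehomogenizing merges no monomials.\<close>

lemma lookup_dehomogenize_homogeneous:
  fixes F :: "'a::comm_ring_1 mpoly"
  assumes V: "vars_less (Suc r) F" and hom: "\<And>a. a \<in> keys F \<Longrightarrow> total_degree a = d"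
    and a0: "a0 \<in> keys F"
  shows "lookup (dehomogenize r F) (monom_restrict a0 {..<r}) = lookup F a0"
proof -
  have "monom_restrict a {..<r} = monom_restrict a0 {..<r} \<longleftrightarrow> a = a0" if a: "a \<in> keys F" for a
  proof
    assume e: "monom_restrict a {..<r} = monom_restrict a0 {..<r}"
    have ka: "keys a \<subseteq> {..<Suc r}" "keys a0 \<subseteq> {..<Suc r}" using V a a0 by (auto simp: vars_less_def)
    have "total_degree a = total_degree (monom_restrict a {..<r}) + lookup a r"
      "total_degree a0 = total_degree (monom_restrict a0 {..<r}) + lookup a0 r"
      using monom_split_last[OF ka(1)] monom_split_last[OF ka(2)] by (metis total_degree_add total_degree_single)+
    then have "lookup a r = lookup a0 r" using e hom[OF a] hom[OF a0] by simp
    then show "a = a0" using monom_split_last[OF ka(1)] monom_split_last[OF ka(2)] e by metis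
  qed simp
  then show ?thesis using a0 by (simp add: lookup_dehomogenize[OF V] sum.delta' cong: sum.cong)
qed

lemma keys_dehomogenize:
  assumes "vars_less (Suc r) F" "b \<in> keys (dehomogenize r F)"
  obtains a where "a \<in> keys F" "monom_restrict a {..<r} = b"
  using assms by (auto simp: in_keys_iff lookup_dehomogenize intro: ccontr
      elim!: sum.not_neutral_contains_not_neutral split: if_splits)

lemma vars_less_dehomogenize:
  assumes "vars_less (Suc r) F" shows "vars_less r (dehomogenize r F)"
  unfolding vars_less_def
proof
  fix b assume "b \<in> keys (dehomogenize r F)"
  then obtain a where "monom_restrict a {..<r} = b" using keys_dehomogenize[OF assms] by blast
  then show "keys b \<subseteq> {..<r}" by (auto simp: keys_monom_restrict)
qed

lemma total_degree_dehomogenize_le: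
  assumes V: "vars_less (Suc r) F" and d: "\<And>a. a \<in> keys F \<Longrightarrow> total_degree a \<le> d"
    and b: "b \<in> keys (dehomogenize r F)"
  shows "total_degree b \<le> d"
proof -
  obtain a where a: "a \<in> keys F" "monom_restrict a {..<r} = b" using keys_dehomogenize[OF V b] by blast
  have "keys a \<subseteq> {..<Suc r}" using V a(1) by (auto simp: vars_less_def)
  then have "total_degree b \<le> total_degree a" using a(2) total_degree_monom_restrict_le by blast
  then show ?thesis using d[OF a(1)] by linarith
qed

lemma dehomogenize_homogeneous_part_nonzero:
  fixes f :: "'a::comm_ring_1 mpoly"
  assumes V: "vars_less (Suc r) f" and a0: "a0 \<in> keys f" "total_degree a0 = d"
  shows "dehomogenize r (homogeneous_part d f) \<noteq> 0"
proof -
  have a0F: "a0 \<in> keys (homogeneous_part d f)" using a0 by (simp add: keys_homogeneous_part)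
  have "lookup (dehomogenize r (homogeneous_part d f)) (monom_restrict a0 {..<r}) = lookup (homogeneous_part d f) a0"
    by (rule lookup_dehomogenize_homogeneous[OF vars_less_homogeneous_part[OF V] _ a0F])
      (simp add: keys_homogeneous_part)
  then show ?thesis using a0F by (auto simp: in_keys_iff)
qed

lemma translate_dehomogenize:
  "translate a (dehomogenize r F) =
    msubst mconst (\<lambda>i. if i < r then mconst ((a(r := 1)) i) + mvar i else 1) F"
proof -
  have "translate a (dehomogenize r F) =
      msubst (translate a \<circ> mconst) (translate a \<circ> (\<lambda>i. if i \<in> {..<r} then mvar i else mconst 1)) F"
    unfolding dehomogenize_def translate_def
    by (rule msubst_comp[OF semiring_hom_mconst semiring_hom_msubst[OF semiring_hom_mconst]])
  also have "translate a \<circ> mconst = mconst"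
    by (rule ext) (simp add: translate_def msubst_mconst[OF semiring_hom_mconst])
  also have "translate a \<circ> (\<lambda>i. if i \<in> {..<r} then mvar i else mconst 1) =
      (\<lambda>i. if i < r then mconst ((a(r := 1)) i) + mvar i else 1)"
    by (rule ext) (simp add: translate_def msubst_mconst[OF semiring_hom_mconst]
        msubst_mvar[OF semiring_hom_mconst] msubst_one[OF semiring_hom_mconst])
  finally show ?thesis .
qed

lemma vanishing_order_dehomogenize_ge:
  fixes f :: "'a::field mpoly"
  assumes Vf: "vars_less (Suc r) f" and dl: "\<And>b. b \<in> keys f \<Longrightarrow> total_degree b \<le> d"
    and vanish: "\<And>p b. p \<in> S \<Longrightarrow> total_degree b < m \<Longrightarrow> lookup (translate p f) b = 0"
    and Sfin: "finite S" and line: "N \<le> card {c. (\<lambda>i. u i + c * (a(r := 1)) i) \<in> S}"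
    and small: "d < N * (m + 1 - l)"
    and h0: "dehomogenize r (homogeneous_part d f) \<noteq> 0"
  shows "l \<le> vanishing_order (dehomogenize r (homogeneous_part d f)) a"
proof (rule vanishing_order_ge)
  define v where "v = a(r := 1)"
  define T where "T = {c. (\<lambda>i. u i + c * v i) \<in> S}"
  have "T \<subseteq> (\<lambda>p. p r - u r) ` S" unfolding T_def v_def by force
  then have Tfin: "finite T" using Sfin finite_surj by blast
  have NT: "N \<le> card T" using line by (simp add: T_def v_def)
  have z: "lookup (translate a (dehomogenize r (homogeneous_part d f))) g = 0" if g: "total_degree g < l" for g
  proof -
    have "N * (m + 1 - l) \<le> card T * (m - total_degree g)" using NT g by (intro mult_le_mono) auto
    then have big: "d < card T * (m - total_degree g)" using small by linarith
    have "lookup (translate (\<lambda>i. u i + c * v i) f) b = 0" if "c \<in> T" "total_degree b < m" for c b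
      using vanish that by (auto simp: T_def)
    from homogeneous_part_along_direction[OF Vf dl this Tfin _ big]
    show ?thesis unfolding translate_dehomogenize v_def by simp
  qed
  show "translate a (dehomogenize r (homogeneous_part d f)) \<noteq> 0" using h0 translate_eq_0D by blast
  fix g assume "g \<in> keys (translate a (dehomogenize r (homogeneous_part d f)))"
  then show "l \<le> total_degree g" using z by (auto simp: in_keys_iff not_less[symmetric])
qed

lemma card_binomial_bound:
  fixes S :: "(nat \<Rightarrow> 'a::field) set" and A :: "nat \<Rightarrow> 'a set"
  assumes Sfin: "finite S" and N: "0 < N"
    and A: "\<forall>i<r. finite (A i) \<and> card (A i) = N"
    and lines: "\<And>a. a \<in> grid_vectors r A \<Longrightarrow> \<exists>u. N \<le> card {c. (\<lambda>i. u i + c * (a(r := 1)) i) \<in> S}"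
    and l: "1 \<le> l"
  shows "(l * N - 1 + Suc r) choose Suc r \<le> card S * ((2 * l - 1 + Suc r) choose Suc r)"
proof (rule ccontr)
  assume "\<not> ?thesis"
  then have "card S * card (monoms (Suc r) (2 * l - 1)) < card (monoms (Suc r) (l * N - 1))"
    using monoms_card by simp
  then obtain f :: "'a mpoly" where f: "f \<noteq> 0" "keys f \<subseteq> monoms (Suc r) (l * N - 1)"
    "\<forall>p\<in>S. \<forall>b. total_degree b \<le> 2 * l - 1 \<longrightarrow> lookup (translate p f) b = 0"
    using exists_mpoly_vanishing_to_order[OF Sfin] by blast
  have Vf: "vars_less (Suc r) f" using f(2) by (auto simp: vars_less_def monoms_def)
  define d where "d = Max (total_degree ` keys f)"
  have dl: "\<And>a. a \<in> keys f \<Longrightarrow> total_degree a \<le> d" unfolding d_def by (intro Max_ge) auto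
  have dD: "d \<le> l * N - 1" unfolding d_def using f by (subst Max_le_iff) (auto simp: monoms_def)
  have "d \<in> total_degree ` keys f" unfolding d_def by (rule Max_in) (use f(1) in auto)
  then obtain a0 where a0: "a0 \<in> keys f" "total_degree a0 = d" by auto
  define h where "h = dehomogenize r (homogeneous_part d f)"
  have VF: "vars_less (Suc r) (homogeneous_part d f)" by (rule vars_less_homogeneous_part[OF Vf])
  have h0: "h \<noteq> 0" unfolding h_def by (rule dehomogenize_homogeneous_part_nonzero[OF Vf a0])
  have dh: "\<forall>b\<in>keys h. total_degree b \<le> d"
    using total_degree_dehomogenize_le[OF VF] by (simp add: h_def keys_homogeneous_part)
  have mu: "l \<le> vanishing_order h a" if a: "a \<in> grid_vectors r A" for a
  proof -
    obtain u where u: "N \<le> card {c. (\<lambda>i. u i + c * (a(r := 1)) i) \<in> S}" using lines[OF a] by blast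
    have vanish: "\<And>p b. p \<in> S \<Longrightarrow> total_degree b < 2 * l \<Longrightarrow> lookup (translate p f) b = 0"
      using f(3) by auto
    have small: "d < N * (2 * l + 1 - l)" using dD N by (simp add: algebra_simps)
    show ?thesis
      using vanishing_order_dehomogenize_ge[OF Vf dl vanish Sfin u small] h0 unfolding h_def by blast
  qed
  have "l * N ^ r \<le> (\<Sum>a\<in>grid_vectors r A. vanishing_order h a)"
    using sum_mono[of "grid_vectors r A" "\<lambda>_. l" "vanishing_order h"] mu grid_vectors_card[OF A]
    by (simp add: mult.commute)
  then have "N * (l * N ^ r) \<le> d * N ^ r"
    using sum_vanishing_order_grid_le[OF A h0 vars_less_dehomogenize[OF VF, folded h_def] dh]
    by (meson le_trans mult_le_mono2)
  then have "N * l \<le> d" using N by simp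
  moreover have "d \<le> N * l - 1" using dD by (simp add: mult.commute)
  moreover have "0 < N * l" using l N by simp
  ultimately show False by linarith
qed

section \<open>Passing to the limit\<close>

lemma fact_binomial_bounds:
  "(M + 1) ^ n \<le> fact n * ((M + n) choose n) \<and> fact n * ((M + n) choose n) \<le> (M + n) ^ n"
proof (induction n)
  case 0 then show ?case by simp
next
  case (Suc n)
  have id: "fact (Suc n) * ((M + Suc n) choose Suc n) = Suc (M + n) * (fact n * ((M + n) choose n))"
    using Suc_times_binomial_eq[of "M + n" n] by (simp add: algebra_simps)
  have lo: "(M + 1) ^ Suc n \<le> Suc (M + n) * (fact n * ((M + n) choose n))"
    using Suc.IH mult_le_mono[of "M + 1" "Suc (M + n)" "(M+1)^n" "fact n * ((M + n) choose n)"] by simp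
  have "Suc (M + n) * (fact n * ((M + n) choose n)) \<le> Suc (M + n) * (M + n) ^ n"
    by (rule mult_le_mono2) (use Suc.IH in blast)
  also have "\<dots> \<le> Suc (M + n) * (M + Suc n) ^ n" by (rule mult_le_mono2) (rule power_mono; simp)
  finally have up: "Suc (M + n) * (fact n * ((M + n) choose n)) \<le> (M + Suc n) ^ Suc n" by simp
  show ?case using lo up id by simp
qed

lemma binomial_bound_limit:
  assumes H: "\<And>l. 1 \<le> l \<Longrightarrow> (l * N - 1 + n) choose n \<le> s * ((2 * l - 1 + n) choose n)"
    and N: "0 < N"
  shows "(real N / 2) ^ n \<le> real s"
proof -
  define X where "X = (\<lambda>l::nat. (real l * real N / (2 * real l - 1 + real n)) ^ n)"
  have lim: "X \<longlonglongrightarrow> (real N / 2) ^ n"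
  proof -
    have "((\<lambda>l. real l * real N / (2 * real l - 1 + real n)) \<longlongrightarrow> real N / 2) sequentially"
      by real_asymp
    then show ?thesis unfolding X_def by (rule tendsto_power)
  qed
  have le: "X l \<le> real s" if l: "1 \<le> l" for l
  proof -
    have lN: "1 \<le> l * N" using l N by simp
    have "(l * N) ^ n \<le> fact n * ((l * N - 1 + n) choose n)"
      using fact_binomial_bounds[of "l * N - 1" n] lN by simp
    also have "\<dots> \<le> fact n * (s * ((2 * l - 1 + n) choose n))" using H[OF l] by simp
    also have "\<dots> = s * (fact n * ((2 * l - 1 + n) choose n))" by simp
    also have "\<dots> \<le> s * (2 * l - 1 + n) ^ n" using fact_binomial_bounds[of "2 * l - 1" n] by simp
    finally have nat: "(l * N) ^ n \<le> s * (2 * l - 1 + n) ^ n" .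
    have r: "real (2 * l - 1 + n) = 2 * real l - 1 + real n" using l by (simp add: of_nat_diff)
    have pos: "0 < 2 * real l - 1 + real n" using l by simp
    have "real ((l * N) ^ n) \<le> real (s * (2 * l - 1 + n) ^ n)" using nat by (simp only: of_nat_le_iff)
    then have "(real l * real N) ^ n \<le> real s * (real (2 * l - 1 + n)) ^ n" by (simp only: of_nat_power of_nat_mult)
    then have "(real l * real N) ^ n \<le> real s * (2 * real l - 1 + real n) ^ n" by (simp only: r)
    then show ?thesis unfolding X_def using pos by (simp add: power_divide divide_le_eq)
  qed
  show ?thesis by (rule LIMSEQ_le_const2[OF lim]) (use le in auto)
qed

section \<open>Change of coordinates\<close>

definition basis_comb :: "nat \<Rightarrow> (nat \<Rightarrow> nat \<Rightarrow> 'a::field) \<Rightarrow> (nat \<Rightarrow> 'a) \<Rightarrow> (nat \<Rightarrow> 'a)" where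
  "basis_comb n b y = (\<lambda>j. \<Sum>i<n. y i * b i j)"

lemma basis_comb_inj:
  assumes "is_basis n b" "y \<in> kvec n" "y' \<in> kvec n" "basis_comb n b y = basis_comb n b y'"
  shows "y = y'"
proof -
  have d: "(\<Sum>i<n. (y i - y' i) * b i j) = basis_comb n b y j - basis_comb n b y' j" for j
    by (simp add: basis_comb_def left_diff_distrib sum_subtractf)
  have "\<forall>j. (\<Sum>i<n. (y i - y' i) * b i j) = 0" using assms(4) by (simp add: d)
  then have z: "\<forall>i<n. y i - y' i = 0"
    using assms(1)[unfolded is_basis_def, THEN conjunct2, rule_format, of "\<lambda>i. y i - y' i"] by blast
  show ?thesis
  proof
    fix i show "y i = y' i"
      using z assms(2,3) by (cases "i < n") (simp_all add: kvec_def)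
  qed
qed

lemma basis_comb_surj:
  assumes B: "is_basis n b" and x: "x \<in> kvec n"
  shows "\<exists>y\<in>kvec n. basis_comb n b y = x"
proof -
  define w where "w = (\<lambda>j i. if i < n then b i j else x j)"
  obtain c where c: "\<exists>i\<in>{..n}. c i \<noteq> 0" "\<forall>j\<in>{..<n}. (\<Sum>i\<in>{..n}. w j i * c i) = 0"
    using homogeneous_linear_system_solvable[of "{..<n}" "{..n}" w] by auto
  have eq: "(\<Sum>i<n. c i * b i j) + c n * x j = 0" for j
  proof (cases "j < n")
    case True
    then have "(\<Sum>i\<in>{..n}. w j i * c i) = 0" using c(2) by auto
    then show ?thesis by (simp add: w_def lessThan_Suc_atMost[symmetric] mult.commute)
  next
    case False
    then show ?thesis using B x by (auto simp: is_basis_def kvec_def)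
  qed
  have cn: "c n \<noteq> 0"
  proof
    assume "c n = 0"
    then have "\<forall>i<n. c i = 0" using B eq unfolding is_basis_def by auto
    then show False using c(1) \<open>c n = 0\<close> by (auto simp: le_less)
  qed
  define y where "y = (\<lambda>i. if i < n then - c i / c n else 0)"
  have "basis_comb n b y j = x j" for j
  proof -
    have "c n * x j = - (\<Sum>i<n. c i * b i j)" using eq[of j] by (simp add: add.commute eq_neg_iff_add_eq_0)
    then have "x j = - (\<Sum>i<n. c i * b i j) / c n" using cn nonzero_mult_div_cancel_left[of "c n" "x j"] by simp
    then show ?thesis by (simp add: basis_comb_def y_def sum_divide_distrib sum_negf)
  qed
  moreover have "y \<in> kvec n" by (simp add: y_def kvec_def)
  ultimately show ?thesis by blast
qed

lemma basis_comb_lin: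
  "basis_comb n b (\<lambda>i. u i + c * w i) = (\<lambda>j. basis_comb n b u j + c * basis_comb n b w j)"
  unfolding basis_comb_def by (rule ext) (simp add: distrib_right sum.distrib sum_distrib_left mult.assoc)

lemma bij_betw_basis_comb_preimage:
  assumes "is_basis n b" "S \<subseteq> kvec n"
  shows "bij_betw (basis_comb n b) {y \<in> kvec n. basis_comb n b y \<in> S} S"
  unfolding bij_betw_def
proof
  show "inj_on (basis_comb n b) {y \<in> kvec n. basis_comb n b y \<in> S}"
    by (rule inj_onI) (use basis_comb_inj[OF assms(1)] in auto)
  show "basis_comb n b ` {y \<in> kvec n. basis_comb n b y \<in> S} = S"
  proof (intro subset_antisym subsetI)
    fix x assume "x \<in> S"
    then obtain y where "y \<in> kvec n" "basis_comb n b y = x"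
      using basis_comb_surj[OF assms(1)] assms(2) by blast
    with \<open>x \<in> S\<close> show "x \<in> basis_comb n b ` {y \<in> kvec n. basis_comb n b y \<in> S}" by blast
  qed auto
qed

lemma card_line_reparam:
  fixes w :: "nat \<Rightarrow> 'a::field"
  assumes "w \<noteq> (\<lambda>i. 0)" "c0 \<noteq> 0"
  shows "card {c. (\<lambda>i. u i + c * w i) \<in> S} = card (aline u (\<lambda>i. c0 * w i) \<inter> S)"
proof -
  define P where "P = (\<lambda>c. (\<lambda>i. u i + c * w i))"
  obtain j0 where j0: "w j0 \<noteq> 0" using assms(1) by auto
  have inj: "inj P"
  proof (rule injI)
    fix x y assume "P x = P y"
    from fun_cong[OF this, of j0] have "x * w j0 = y * w j0" by (simp add: P_def)
    then show "x = y" using j0 by simp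
  qed
  have img:  "P ` {c. P c \<in> S} = aline u (\<lambda>i. c0 * w i) \<inter> S"
  proof -
    have e1: "(\<lambda>i. u i + c * (c0 * w i)) = P (c * c0)" for c by (simp add: P_def mult.assoc)
    have e2: "P c = (\<lambda>i. u i + (c / c0) * (c0 * w i))" for c using assms(2) by (simp add: P_def)
    have "aline u (\<lambda>i. c0 * w i) = range P"
    proof (intro subset_antisym subsetI)
      fix x assume "x \<in> aline u (\<lambda>i. c0 * w i)"
      then obtain c where "x = (\<lambda>i. u i + c * (c0 * w i))" unfolding aline_def by blast
      then show "x \<in> range P" using e1 by blast
    next
      fix x assume "x \<in> range P"
      then obtain c where "x = P c" by blast
      then show "x \<in> aline u (\<lambda>i. c0 * w i)" unfolding aline_def using e2 by blast
    qed
    then show ?thesis by auto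
  qed
  have "card (P ` {c. P c \<in> S}) = card {c. P c \<in> S}"
    by (rule card_image) (rule inj_on_subset[OF inj subset_UNIV])
  then show ?thesis using img unfolding P_def by simp
qed

lemma directions_ppointE:
  assumes "ppoint w \<in> directions n L"
  obtains u c0 where "u \<in> kvec n" "c0 \<noteq> 0" "w \<noteq> (\<lambda>i. 0)" "aline u (\<lambda>i. c0 * w i) \<in> L"
proof -
  obtain v u where v: "v \<noteq> (\<lambda>i. 0)" "ppoint w = ppoint v" and u: "u \<in> kvec n" "aline u v \<in> L"
    using assms unfolding directions_def by blast
  have "v \<in> ppoint v" unfolding ppoint_def by (rule CollectI, rule exI[of _ 1]) simp
  then obtain c0 where c0: "c0 \<noteq> 0" "v = (\<lambda>i. c0 * w i)" using v(2) unfolding ppoint_def by auto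
  have "w \<noteq> (\<lambda>i. 0)" using v(1) c0(2) by auto
  then show ?thesis using that u c0 by blast
qed

text \<open>In the coordinates of the basis of the grid, each grid direction is \<open>a(r := 1)\<close>
  with \<open>a\<close> in the grid.\<close>

lemma grid_lines_in_coordinates:
  fixes S :: "(nat \<Rightarrow> 'a::field) set"
  assumes B: "is_basis (Suc r) b" and Sfin: "finite S"
    and lines: "\<forall>l\<in>L. infinite (l \<inter> S) \<or> card (l \<inter> S) \<ge> N"
    and G: "grid (Suc r) b A \<subseteq> directions (Suc r) L" and a: "a \<in> grid_vectors r A"
  shows "\<exists>u. N \<le> card {c. (\<lambda>i. u i + c * (a(r := 1)) i) \<in> {y \<in> kvec (Suc r). basis_comb (Suc r) b y \<in> S}}"
proof -
  define n where "n = Suc r"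
  define w where "w = a(r := 1)"
  have wk: "w \<in> kvec n" using a by (auto simp: w_def grid_vectors_def kvec_def n_def)
  define Va where "Va = (\<lambda>j. (\<Sum>i<n-1. a i * b i j) + b (n-1) j)"
  have "basis_comb n b w j = Va j" for j
  proof -
    have "(\<Sum>i<r. w i * b i j) = (\<Sum>i<r. a i * b i j)" by (rule sum.cong) (auto simp: w_def)
    then show ?thesis by (simp add: basis_comb_def Va_def n_def w_def)
  qed
  then have bw: "basis_comb n b w = Va" by blast
  have "ppoint Va \<in> grid n b A" unfolding grid_def Va_def using a by (auto simp: grid_vectors_def n_def)
  then have "ppoint Va \<in> directions n L" using G n_def by blast
  then obtain u c0 where u: "u \<in> kvec n" "c0 \<noteq> 0" "Va \<noteq> (\<lambda>i. 0)" "aline u (\<lambda>i. c0 * Va i) \<in> L"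
    by (rule directions_ppointE)
  have "N \<le> card (aline u (\<lambda>i. c0 * Va i) \<inter> S)" using lines u(4) Sfin by auto
  then have NP: "N \<le> card {c. (\<lambda>i. u i + c * Va i) \<in> S}"
    using card_line_reparam[OF u(3,2)] by simp
  obtain u' where u': "u' \<in> kvec n" "basis_comb n b u' = u"
    using basis_comb_surj[OF B[folded n_def] u(1)] by blast
  have "(\<lambda>i. u' i + c * w i) \<in> kvec n" for c using u'(1) wk by (simp add: kvec_def)
  moreover have "basis_comb n b (\<lambda>i. u' i + c * w i) = (\<lambda>i. u i + c * Va i)" for c
    by (simp only: basis_comb_lin u'(2) bw)
  ultimately have "{c. (\<lambda>i. u' i + c * w i) \<in> {y \<in> kvec n. basis_comb n b y \<in> S}} = {c. (\<lambda>i. u i + c * Va i) \<in> S}"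
    by auto
  then show ?thesis using NP unfolding w_def n_def by (intro exI[of _ u']) simp
qed

theorem theorem3p4:
  fixes n N :: nat and L :: "(nat \<Rightarrow> 'a::field) set set" and S :: "(nat \<Rightarrow> 'a) set"
  assumes "n \<ge> 2" and "N > 0"
    and "\<forall>l\<in>L. is_aline n l"
    and "S \<subseteq> kvec n"
    and "\<forall>l\<in>L. infinite (l \<inter> S) \<or> card (l \<inter> S) \<ge> N"
    and "contains_grid n N (directions n L)"
  shows "infinite S \<or> real (card S) \<ge> (real N / 2) ^ n"
proof (cases "finite S")
  case Sfin: True
  obtain r where n: "n = Suc r" using assms(1) by (metis Suc_pred' not_gr0 not_numeral_le_zero)
  obtain b A where B: "is_basis n b" and A: "\<forall>i<r. finite (A i) \<and> card (A i) = N"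
    and G: "grid n b A \<subseteq> directions n L"
    using assms(6) unfolding contains_grid_def n by auto
  define S' where "S' = {y \<in> kvec n. basis_comb n b y \<in> S}"
  have bij: "bij_betw (basis_comb n b) S' S"
    unfolding S'_def by (rule bij_betw_basis_comb_preimage[OF B assms(4)])
  have "finite S'" using bij Sfin bij_betw_finite by blast
  moreover have "\<And>a. a \<in> grid_vectors r A \<Longrightarrow> \<exists>u. N \<le> card {c. (\<lambda>i. u i + c * (a(r := 1)) i) \<in> S'}"
    using grid_lines_in_coordinates[OF B[unfolded n] Sfin assms(5) G[unfolded n]] by (simp add: S'_def n)
  ultimately have "\<And>l. 1 \<le> l \<Longrightarrow> (l * N - 1 + n) choose n \<le> card S' * ((2 * l - 1 + n) choose n)"
    using card_binomial_bound[OF _ assms(2) A] n by blast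
  then have "(real N / 2) ^ n \<le> real (card S')" by (rule binomial_bound_limit[OF _ assms(2)])
  then show ?thesis using bij_betw_same_card[OF bij] by simp
qed simp

end
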